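(* Let $n\geq 1$. The map sending a type $\mathrm{tp}(f_1,\dots,f_n)\in S_n(\emptyset)$ (with $f_i\in M_{[0,1]}$) to $\mathrm{im}(f_1,\dots,f_n)$ is a well-defined isometric bijection from $S_n(\emptyset)$ of $\mathrm{Th}(M_{[0,1]})$ onto the set of all connected chains from $0$ to $1$ in $[0,1]^n$, where $S_n(\emptyset)$ carries the type-space metric and the set of chains carries the Hausdorff metric for compact subsets of $[0,1]^n$ equipped with the sup metric.
   Context: $M_{[0,1]}$ is the set of continuous nondecreasing functions $f:[0,1]\to[0,1]$ with $f(0)=0$, $f(1)=1$, with the sup metric, regarded as a metric structure in the language of binary predicates $\varphi_\alpha$ ($\alpha\in\mathbb{Q}\cap[0,1]$), where $\varphi_\alpha(f,g)=f(t)$ for any $t$ with $f(t)+g(t)=\alpha$. Every $n$-type of $\mathrm{Th}(M_{[0,1]})$ is realized in $M_{[0,1]}$. The type-space metric is $d(p,q)=\inf\{\max_i \sup_t|f_i(t)-g_i(t)|: \mathrm{tp}(\bar f)=p,\ \mathrm{tp}(\bar g)=q\}$. $\mathrm{im}(f_1,\dots,f_n)=\{(f_1(t),\dots,f_n(t)):t\in[0,1]\}$. A chain from $0$ to $1$ in $[0,1]^n$ is a subset linearly ordered by the coordinatewise order and containing the constant tuples $(0,\dots,0)$ and $(1,\dots,1)$. *)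

theory Defs
  imports "HOL-Analysis.Analysis"
begin

text \<open>Elements of M_[0,1]: continuous nondecreasing f on [0,1] with f 0 = 0, f 1 = 1.
  Functions are represented as real => real; only their values on [0,1] matter.\<close>

definition inM :: "(real \<Rightarrow> real) \<Rightarrow> bool" where
  "inM f \<longleftrightarrow> continuous_on {0..1} f \<and> mono_on {0..1} f \<and> f 0 = 0 \<and> f 1 = 1"

definition Mset :: "(real \<Rightarrow> real) set" where
  "Mset = {f. inM f}"

definition supdist :: "(real \<Rightarrow> real) \<Rightarrow> (real \<Rightarrow> real) \<Rightarrow> real" where
  "supdist f g = (SUP t\<in>{0..1}. \<bar>f t - g t\<bar>)"

definition phiM :: "real \<Rightarrow> (real \<Rightarrow> real) \<Rightarrow> (real \<Rightarrow> real) \<Rightarrow> real" where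
  "phiM \<alpha> f g = f (SOME t. t \<in> {0..1} \<and> f t + g t = \<alpha>)"

text \<open>Connectives: the full system {1, 1-x, x/2, truncated minus}; quantifiers sup, inf.
  Atm a i j is phi_a(x_i,x_j) (only a in Q \<inter> [0,1] are symbols; other a evaluate to 0).\<close>
datatype form =
    Atm rat nat nat
  | Dst nat nat
  | One
  | Neg form
  | Half form
  | Minus form form
  | SupQ nat form
  | InfQ nat form

primrec fv :: "form \<Rightarrow> nat set" where
  "fv (Atm a i j) = {i, j}"
| "fv (Dst i j) = {i, j}"
| "fv One = {}"
| "fv (Neg p) = fv p"
| "fv (Half p) = fv p"
| "fv (Minus p q) = fv p \<union> fv q"
| "fv (SupQ x p) = fv p - {x}"
| "fv (InfQ x p) = fv p - {x}"

primrec eval :: "form \<Rightarrow> (nat \<Rightarrow> real \<Rightarrow> real) \<Rightarrow> real" where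
  "eval (Atm a i j) e = (if 0 \<le> a \<and> a \<le> 1 then phiM (real_of_rat a) (e i) (e j) else 0)"
| "eval (Dst i j) e = supdist (e i) (e j)"
| "eval One e = 1"
| "eval (Neg p) e = 1 - eval p e"
| "eval (Half p) e = eval p e / 2"
| "eval (Minus p q) e = max (eval p e - eval q e) 0"
| "eval (SupQ x p) e = (SUP g\<in>Mset. eval p (e(x := g)))"
| "eval (InfQ x p) e = (INF g\<in>Mset. eval p (e(x := g)))"

text \<open>An n-tuple of M: fs i for i < n (entries i \<ge> n are irrelevant).\<close>
definition tuples :: "nat \<Rightarrow> (nat \<Rightarrow> real \<Rightarrow> real) set" where
  "tuples n = {fs. \<forall>i<n. inM (fs i)}"

definition tp :: "nat \<Rightarrow> (nat \<Rightarrow> real \<Rightarrow> real) \<Rightarrow> (form \<Rightarrow> real)" where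
  "tp n fs = (\<lambda>\<phi>. if fv \<phi> \<subseteq> {..<n} then eval \<phi> fs else 0)"

text \<open>S_n(empty) (every type is realized in M).\<close>
definition Sn :: "nat \<Rightarrow> (form \<Rightarrow> real) set" where
  "Sn n = tp n ` tuples n"

definition tupdist :: "nat \<Rightarrow> (nat \<Rightarrow> real \<Rightarrow> real) \<Rightarrow> (nat \<Rightarrow> real \<Rightarrow> real) \<Rightarrow> real" where
  "tupdist n fs gs = Max ((\<lambda>i. supdist (fs i) (gs i)) ` {..<n})"

definition tdist :: "nat \<Rightarrow> (form \<Rightarrow> real) \<Rightarrow> (form \<Rightarrow> real) \<Rightarrow> real" where
  "tdist n p q = Inf {tupdist n fs gs | fs gs. fs \<in> tuples n \<and> gs \<in> tuples n \<and> tp n fs = p \<and> tp n gs = q}"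

text \<open>Points of R^n are represented as nat => real, vanishing at coordinates \<ge> n
  (with the product topology on nat => real, this is a homeomorphic copy of R^n).\<close>
definition pt :: "nat \<Rightarrow> (nat \<Rightarrow> real) \<Rightarrow> (nat \<Rightarrow> real)" where
  "pt n x = (\<lambda>i. if i < n then x i else 0)"

definition im :: "nat \<Rightarrow> (nat \<Rightarrow> real \<Rightarrow> real) \<Rightarrow> (nat \<Rightarrow> real) set" where
  "im n fs = {pt n (\<lambda>i. fs i t) | t. t \<in> {0..1}}"

definition cube :: "nat \<Rightarrow> (nat \<Rightarrow> real) set" where
  "cube n = {x. (\<forall>i<n. 0 \<le> x i \<and> x i \<le> 1) \<and> (\<forall>i\<ge>n. x i = 0)}"

definition cle :: "nat \<Rightarrow> (nat \<Rightarrow> real) \<Rightarrow> (nat \<Rightarrow> real) \<Rightarrow> bool" where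
  "cle n x y \<longleftrightarrow> (\<forall>i<n. x i \<le> y i)"

definition is_chain01 :: "nat \<Rightarrow> (nat \<Rightarrow> real) set \<Rightarrow> bool" where
  "is_chain01 n C \<longleftrightarrow> C \<subseteq> cube n
     \<and> (\<forall>x\<in>C. \<forall>y\<in>C. cle n x y \<or> cle n y x)
     \<and> pt n (\<lambda>_. 0) \<in> C \<and> pt n (\<lambda>_. 1) \<in> C"

definition conn_chains :: "nat \<Rightarrow> (nat \<Rightarrow> real) set set" where
  "conn_chains n = {C. is_chain01 n C \<and> connected C}"

definition supd :: "nat \<Rightarrow> (nat \<Rightarrow> real) \<Rightarrow> (nat \<Rightarrow> real) \<Rightarrow> real" where
  "supd n x y = Max ((\<lambda>i. \<bar>x i - y i\<bar>) ` {..<n})"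

definition hausd :: "nat \<Rightarrow> (nat \<Rightarrow> real) set \<Rightarrow> (nat \<Rightarrow> real) set \<Rightarrow> real" where
  "hausd n A B = max (SUP a\<in>A. INF b\<in>B. supd n a b) (SUP b\<in>B. INF a\<in>A. supd n a b)"

definition imT :: "nat \<Rightarrow> (form \<Rightarrow> real) \<Rightarrow> (nat \<Rightarrow> real) set" where
  "imT n p = im n (SOME fs. fs \<in> tuples n \<and> tp n fs = p)"

end

theory Submission
  imports Defs
begin

(* A tuple of M_[0,1] is a monotone path from 0 to 1 in [0,1]^n, so its image is a connected
   chain; conversely a connected chain is parametrised by its coordinate sum.
   The type determines the image: a point x of the cube lies off the image iff some coordinate
   f_i passes x_i while another f_j is still below x_j, and this is expressed by a sup-formula
   in the predicates phi_alpha with rational parameters.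
   The image determines the type: formulas are invariant under increasing homeomorphisms of
   [0,1] and Lipschitz in the sup metric, and tuples with the same image become uniformly close
   after reparametrising both by a slightly perturbed coordinate sum.
   For the isometry, realisations at sup distance e have images at Hausdorff distance at most e;
   conversely, images at Hausdorff distance below d admit monotone reparametrisations at sup
   distance below d + eta, found by following the zero set of a potential that is strictly
   increasing along every antidiagonal s + r = const. *)

lemma Max_lessThan_le_iff:
  fixes f :: "nat \<Rightarrow> 'a::linorder"
  assumes "0 < n"
  shows "Max (f ` {..<n}) \<le> c \<longleftrightarrow> (\<forall>i<n. f i \<le> c)"
  using assms by (subst Max_le_iff) auto

lemma Max_lessThan_less_iff:
  fixes f :: "nat \<Rightarrow> 'a::linorder"
  assumes "0 < n"
  shows "Max (f ` {..<n}) < c \<longleftrightarrow> (\<forall>i<n. f i < c)"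
  using assms by (subst Max_less_iff) auto

lemma Max_lessThan_ge:
  fixes f :: "nat \<Rightarrow> 'a::linorder"
  shows "i < n \<Longrightarrow> f i \<le> Max (f ` {..<n})"
  by (intro Max_ge) auto

lemma continuous_on_Max:
  fixes f :: "'i \<Rightarrow> 'a::topological_space \<Rightarrow> 'b::linorder_topology"
  assumes "finite I" "I \<noteq> {}" "\<And>i. i \<in> I \<Longrightarrow> continuous_on S (f i)"
  shows "continuous_on S (\<lambda>x. Max ((\<lambda>i. f i x) ` I))"
  using assms
proof (induction I rule: finite_ne_induct)
  case (insert a I)
  then show ?case by (simp add: Max_insert continuous_on_max)
qed simp

lemma cSUP_abs_diff_le:
  fixes A B :: "'a \<Rightarrow> real"
  assumes "S \<noteq> {}" "bdd_above (A ` S)" "bdd_above (B ` S)" "\<And>x. x \<in> S \<Longrightarrow> \<bar>A x - B x\<bar> \<le> c"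
  shows "\<bar>(SUP x\<in>S. A x) - (SUP x\<in>S. B x)\<bar> \<le> c"
proof -
  have "A x \<le> (SUP x\<in>S. B x) + c" "B x \<le> (SUP x\<in>S. A x) + c" if "x \<in> S" for x
    using that assms(4)[OF that] cSUP_upper[OF that assms(2)] cSUP_upper[OF that assms(3)]
    by (auto simp: abs_le_iff)
  then have "(SUP x\<in>S. A x) \<le> (SUP x\<in>S. B x) + c" "(SUP x\<in>S. B x) \<le> (SUP x\<in>S. A x) + c"
    using assms(1) by (auto intro: cSUP_least)
  then show ?thesis by linarith
qed

lemma cINF_abs_diff_le:
  fixes A B :: "'a \<Rightarrow> real"
  assumes "S \<noteq> {}" "bdd_below (A ` S)" "bdd_below (B ` S)" "\<And>x. x \<in> S \<Longrightarrow> \<bar>A x - B x\<bar> \<le> c"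
  shows "\<bar>(INF x\<in>S. A x) - (INF x\<in>S. B x)\<bar> \<le> c"
proof -
  have "(INF x\<in>S. A x) - c \<le> B x" "(INF x\<in>S. B x) - c \<le> A x" if "x \<in> S" for x
    using that assms(4)[OF that] cINF_lower[OF assms(2) that] cINF_lower[OF assms(3) that]
    by (auto simp: abs_le_iff)
  then have "(INF x\<in>S. A x) - c \<le> (INF x\<in>S. B x)" "(INF x\<in>S. B x) - c \<le> (INF x\<in>S. A x)"
    using assms(1) by (auto intro: cINF_greatest)
  then show ?thesis by linarith
qed

lemma Mset_iff [simp]: "f \<in> Mset \<longleftrightarrow> inM f"
  by (simp add: Mset_def)

lemma inM_mono: "inM f \<Longrightarrow> s \<in> {0..1} \<Longrightarrow> t \<in> {0..1} \<Longrightarrow> s \<le> t \<Longrightarrow> f s \<le> f t"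
  unfolding inM_def mono_on_def by blast

lemma inM_cont: "inM f \<Longrightarrow> continuous_on {0..1} f"
  and inM_0: "inM f \<Longrightarrow> f 0 = 0"
  and inM_1: "inM f \<Longrightarrow> f 1 = 1"
  unfolding inM_def by auto

lemma inM_range: "inM f \<Longrightarrow> t \<in> {0..1} \<Longrightarrow> 0 \<le> f t \<and> f t \<le> 1"
  using inM_mono[of f 0 t] inM_mono[of f t 1] by (auto simp: inM_0 inM_1)

lemma inM_id: "inM (\<lambda>t. t)"
  unfolding inM_def by (auto intro!: continuous_intros simp: mono_on_def)

lemma Mset_nonempty: "Mset \<noteq> {}"
  using inM_id by auto

lemma phiM_eq:
  assumes "inM f" "inM g" "t \<in> {0..1}" "f t + g t = a"
  shows "phiM a f g = f t"
proof -
  \<comment> \<open>f + g is nondecreasing, so f is constant on its level sets and the choice by SOME is irrelevant\<close>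
  define s where "s = (SOME t. t \<in> {0..1} \<and> f t + g t = a)"
  have s: "s \<in> {0..1}" "f s + g s = a"
    unfolding s_def using someI_ex[of "\<lambda>t. t \<in> {0..1} \<and> f t + g t = a"] assms(3,4) by blast+
  have "f s = f t"
    using inM_mono[OF assms(1) s(1) assms(3)] inM_mono[OF assms(2) s(1) assms(3)]
      inM_mono[OF assms(1) assms(3) s(1)] inM_mono[OF assms(2) assms(3) s(1)] s assms(4)
    by (cases "s \<le> t") linarith+
  then show ?thesis unfolding phiM_def s_def[symmetric] .
qed

lemma phiM_witness:
  assumes "inM f" "inM g" "0 \<le> a" "a \<le> 1"
  obtains t where "t \<in> {0..1}" "f t + g t = a" "phiM a f g = f t"
proof -
  have "continuous_on {0..1} (\<lambda>t. f t + g t)"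
    using assms by (intro continuous_intros inM_cont)
  moreover have "f 0 + g 0 \<le> a" "a \<le> f 1 + g 1"
    using assms by (simp_all add: inM_0 inM_1)
  ultimately obtain t where "t \<in> {0..1}" "f t + g t = a"
    using IVT'[of "\<lambda>t. f t + g t" 0 a 1] by auto
  then show thesis using that phiM_eq[OF assms(1,2)] by blast
qed

lemma phiM_range:
  assumes "inM f" "inM g" "0 \<le> a" "a \<le> 1"
  shows "0 \<le> phiM a f g \<and> phiM a f g \<le> 1"
  using phiM_witness[OF assms] inM_range[OF assms(1)] by metis

lemma phiM_gt_iff:
  assumes "inM f" "inM g" "0 \<le> a" "a \<le> 1"
  shows "b < phiM a f g \<longleftrightarrow> (\<exists>t\<in>{0..1}. b < f t \<and> g t < a - b)"
proof -
  obtain s where s: "s \<in> {0..1}" "f s + g s = a" "phiM a f g = f s"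
    using phiM_witness[OF assms] .
  have "b < f s" if "t \<in> {0..1}" "b < f t" "g t < a - b" for t
    using inM_mono[OF assms(1) that(1) s(1)] inM_mono[OF assms(2) s(1) that(1)] that s
    by (cases "t \<le> s") linarith+
  then show ?thesis using s by auto
qed

lemma phiM_less_iff:
  assumes "inM f" "inM g" "0 \<le> a" "a \<le> 1"
  shows "phiM a f g < b \<longleftrightarrow> (\<exists>t\<in>{0..1}. f t < b \<and> a - b < g t)"
proof -
  obtain s where s: "s \<in> {0..1}" "f s + g s = a" "phiM a f g = f s"
    using phiM_witness[OF assms] .
  have "f s < b" if "t \<in> {0..1}" "f t < b" "a - b < g t" for t
    using inM_mono[OF assms(1) s(1) that(1)] inM_mono[OF assms(2) that(1) s(1)] that s
    by (cases "s \<le> t") linarith+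
  then show ?thesis using s by auto
qed

lemma inM_abs_diff_le_1:
  assumes "inM f" "inM g" "t \<in> {0..1}"
  shows "\<bar>f t - g t\<bar> \<le> 1"
  using inM_range[OF assms(1,3)] inM_range[OF assms(2,3)] by (simp add: abs_le_iff)

lemma bdd_above_abs_diff:
  assumes "inM f" "inM g"
  shows "bdd_above ((\<lambda>t. \<bar>f t - g t\<bar>) ` {0..1})"
  using inM_abs_diff_le_1[OF assms] by (intro bdd_aboveI2[where M=1])

lemma supdist_ge:
  "inM f \<Longrightarrow> inM g \<Longrightarrow> t \<in> {0..1} \<Longrightarrow> \<bar>f t - g t\<bar> \<le> supdist f g"
  unfolding supdist_def by (rule cSUP_upper[OF _ bdd_above_abs_diff])

lemma supdist_le:
  "(\<And>t. t \<in> {0..1} \<Longrightarrow> \<bar>f t - g t\<bar> \<le> c) \<Longrightarrow> supdist f g \<le> c"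
  unfolding supdist_def by (rule cSUP_least) auto

lemma supdist_range:
  assumes "inM f" "inM g"
  shows "0 \<le> supdist f g \<and> supdist f g \<le> 1"
proof
  show "0 \<le> supdist f g"
    using supdist_ge[OF assms, of 0] by simp
  show "supdist f g \<le> 1"
    using inM_abs_diff_le_1[OF assms] by (intro supdist_le)
qed

lemma phiM_lipschitz:
  assumes "inM f" "inM g" "inM f'" "inM g'" "0 \<le> a" "a \<le> 1"
    and "supdist f f' \<le> d" "supdist g g' \<le> d"
  shows "\<bar>phiM a f g - phiM a f' g'\<bar> \<le> 3 * d"
proof -
  obtain s where s: "s \<in> {0..1}" "f s + g s = a" "phiM a f g = f s"
    using phiM_witness[OF assms(1,2,5,6)] .
  obtain s' where s': "s' \<in> {0..1}" "f' s' + g' s' = a" "phiM a f' g' = f' s'"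
    using phiM_witness[OF assms(3-6)] .
  have df: "\<bar>f s' - f' s'\<bar> \<le> d" and dg: "\<bar>g s' - g' s'\<bar> \<le> d"
    using supdist_ge[OF assms(1,3) s'(1)] supdist_ge[OF assms(2,4) s'(1)] assms(7,8) by linarith+
  \<comment> \<open>between s and s' both f and g move in the same direction, while f + g changes by at most 2 d\<close>
  have "\<bar>f s - f s'\<bar> \<le> 2 * d"
    using inM_mono[OF assms(1) s(1) s'(1)] inM_mono[OF assms(2) s(1) s'(1)]
      inM_mono[OF assms(1) s'(1) s(1)] inM_mono[OF assms(2) s'(1) s(1)] s s' df dg
    by (cases "s \<le> s'") (auto simp: abs_le_iff)
  then show ?thesis using s s' df by linarith
qed

lemma eval_range:
  "(\<And>i. i \<in> fv \<phi> \<Longrightarrow> inM (e i)) \<Longrightarrow> 0 \<le> eval \<phi> e \<and> eval \<phi> e \<le> 1"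
proof (induction \<phi> arbitrary: e)
  case (Atm a i j)
  then show ?case using phiM_range[of "e i" "e j" "real_of_rat a"]
    by (auto simp: of_rat_less_eq[symmetric] simp del: of_rat_less_eq)
next
  case (Dst i j)
  then show ?case using supdist_range[of "e i" "e j"] by auto
next
  case (SupQ x p)
  have b: "0 \<le> eval p (e(x := g)) \<and> eval p (e(x := g)) \<le> 1" if "inM g" for g
    using SupQ that by (intro SupQ.IH) auto
  then have "bdd_above ((\<lambda>g. eval p (e(x := g))) ` Mset)"
    by (intro bdd_aboveI2[where M=1]) simp
  then have "0 \<le> (SUP g\<in>Mset. eval p (e(x := g)))"
    using b inM_id by (intro cSUP_upper2[where x="\<lambda>t. t"]) auto
  moreover have "(SUP g\<in>Mset. eval p (e(x := g))) \<le> 1"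
    using b Mset_nonempty by (intro cSUP_least) auto
  ultimately show ?case by simp
next
  case (InfQ x p)
  have b: "0 \<le> eval p (e(x := g)) \<and> eval p (e(x := g)) \<le> 1" if "inM g" for g
    using InfQ that by (intro InfQ.IH) auto
  then have "bdd_below ((\<lambda>g. eval p (e(x := g))) ` Mset)"
    by (intro bdd_belowI2[where m=0]) simp
  then have "(INF g\<in>Mset. eval p (e(x := g))) \<le> 1"
    using b inM_id by (intro cINF_lower2[where x="\<lambda>t. t"]) auto
  moreover have "0 \<le> (INF g\<in>Mset. eval p (e(x := g)))"
    using b Mset_nonempty by (intro cINF_greatest) auto
  ultimately show ?case by simp
qed force+

lemma eval_quantified_bdd:
  assumes "\<And>i. i \<in> fv p - {x} \<Longrightarrow> inM (e i)"
  shows "bdd_above ((\<lambda>g. eval p (e(x := g))) ` Mset)" "bdd_below ((\<lambda>g. eval p (e(x := g))) ` Mset)"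
proof -
  have "0 \<le> eval p (e(x := g)) \<and> eval p (e(x := g)) \<le> 1" if "inM g" for g
    using assms that by (intro eval_range) auto
  then show "bdd_above ((\<lambda>g. eval p (e(x := g))) ` Mset)" "bdd_below ((\<lambda>g. eval p (e(x := g))) ` Mset)"
    by (auto intro: bdd_aboveI2[where M=1] bdd_belowI2[where m=0])
qed

primrec lip_const :: "form \<Rightarrow> real" where
  "lip_const (Atm a i j) = 3"
| "lip_const (Dst i j) = 2"
| "lip_const One = 0"
| "lip_const (Neg p) = lip_const p"
| "lip_const (Half p) = lip_const p"
| "lip_const (Minus p q) = lip_const p + lip_const q"
| "lip_const (SupQ x p) = lip_const p"
| "lip_const (InfQ x p) = lip_const p"

lemma lip_const_nonneg: "0 \<le> lip_const \<phi>"
  by (induction \<phi>) auto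

lemma eval_lipschitz:
  assumes "0 \<le> d"
  shows "(\<And>i. i \<in> fv \<phi> \<Longrightarrow> inM (e i) \<and> inM (e' i) \<and> supdist (e i) (e' i) \<le> d)
    \<Longrightarrow> \<bar>eval \<phi> e - eval \<phi> e'\<bar> \<le> lip_const \<phi> * d"
proof (induction \<phi> arbitrary: e e')
  case (Atm a i j)
  then show ?case
    using assms phiM_lipschitz[of "e i" "e j" "e' i" "e' j" "real_of_rat a" d]
    by (auto simp: of_rat_less_eq[symmetric] simp del: of_rat_less_eq)
next
  case (Dst i j)
  then have m: "inM (e i)" "inM (e j)" "inM (e' i)" "inM (e' j)"
    and "supdist (e i) (e' i) \<le> d" "supdist (e j) (e' j) \<le> d" by auto
  then have "\<bar>e i t - e' i t\<bar> \<le> d \<and> \<bar>e j t - e' j t\<bar> \<le> d" if "t \<in> {0..1}" for t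
    using supdist_ge[OF m(1,3) that] supdist_ge[OF m(2,4) that] by linarith
  then have "\<bar>\<bar>e i t - e j t\<bar> - \<bar>e' i t - e' j t\<bar>\<bar> \<le> 2 * d" if "t \<in> {0..1}" for t
    using that by fastforce
  then show ?case
    unfolding eval.simps lip_const.simps supdist_def
    by (intro cSUP_abs_diff_le bdd_above_abs_diff m) auto
next
  case (Minus p q)
  then have "\<bar>eval p e - eval p e'\<bar> \<le> lip_const p * d" "\<bar>eval q e - eval q e'\<bar> \<le> lip_const q * d"
    by auto
  then show ?case by (simp add: distrib_right)
next
  case (SupQ x p)
  have "\<bar>eval p (e(x := g)) - eval p (e'(x := g))\<bar> \<le> lip_const p * d" if "inM g" for g
    using SupQ.prems that assms supdist_le[of g g d] by (intro SupQ.IH) auto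
  then show ?case
    using SupQ.prems by (auto intro!: cSUP_abs_diff_le Mset_nonempty eval_quantified_bdd)
next
  case (InfQ x p)
  have "\<bar>eval p (e(x := g)) - eval p (e'(x := g))\<bar> \<le> lip_const p * d" if "inM g" for g
    using InfQ.prems that assms supdist_le[of g g d] by (intro InfQ.IH) auto
  then show ?case
    using InfQ.prems by (auto intro!: cINF_abs_diff_le Mset_nonempty eval_quantified_bdd)
qed (fastforce simp: abs_minus_commute)+

section \<open>Invariance under increasing homeomorphisms of [0,1]\<close>

definition incr_homeo :: "(real \<Rightarrow> real) \<Rightarrow> (real \<Rightarrow> real) \<Rightarrow> bool" where
  "incr_homeo h h' \<longleftrightarrow> homeomorphism {0..1} {0..1} h h' \<and> mono_on {0..1} h"

(* outside [0,1] the function is left unchanged, so that reparametrising back recovers it exactly *)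
definition reparam :: "(real \<Rightarrow> real) \<Rightarrow> (real \<Rightarrow> real) \<Rightarrow> real \<Rightarrow> real" where
  "reparam h f t = (if t \<in> {0..1} then f (h t) else f t)"

lemma incr_homeoD:
  assumes "incr_homeo h h'" "t \<in> {0..1}"
  shows "h t \<in> {0..1}" "h' t \<in> {0..1}" "h' (h t) = t" "h (h' t) = t"
  using assms unfolding incr_homeo_def homeomorphism_def by auto

lemma incr_homeo_sym:
  assumes "incr_homeo h h'"
  shows "incr_homeo h' h"
proof -
  have m: "mono_on {0..1} h" using assms by (simp add: incr_homeo_def)
  have "h' r \<le> h' s" if rs: "r \<in> {0..1}" "s \<in> {0..1}" "r \<le> s" for r s
  proof (rule ccontr)
    assume "\<not> h' r \<le> h' s"
    then have "h (h' s) \<le> h (h' r)"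
      using incr_homeoD(2)[OF assms rs(1)] incr_homeoD(2)[OF assms rs(2)] by (intro mono_onD[OF m]) auto
    then have "s = r"
      using incr_homeoD(4)[OF assms rs(1)] incr_homeoD(4)[OF assms rs(2)] rs(3) by simp
    then show False
      using \<open>\<not> h' r \<le> h' s\<close> by simp
  qed
  then show ?thesis
    using assms homeomorphism_symD unfolding incr_homeo_def by (auto intro: mono_onI)
qed

lemma incr_homeo_endpoints:
  assumes "incr_homeo h h'"
  shows "h 0 = 0" "h 1 = 1"
proof -
  have m: "mono_on {0..1} h" using assms by (simp add: incr_homeo_def)
  have "h 0 \<le> h (h' 0)"
    using incr_homeoD(2)[OF assms, of 0] by (intro mono_onD[OF m]) auto
  then show "h 0 = 0"
    using incr_homeoD[OF assms, of 0] by simp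
  have "h (h' 1) \<le> h 1"
    using incr_homeoD(2)[OF assms, of 1] by (intro mono_onD[OF m]) auto
  then show "h 1 = 1"
    using incr_homeoD[OF assms, of 1] by simp
qed

lemma reparam_inM:
  assumes "incr_homeo h h'" "inM f"
  shows "inM (reparam h f)"
proof -
  have "continuous_on {0..1} (\<lambda>t. f (h t))"
    using assms incr_homeoD[OF assms(1)] unfolding incr_homeo_def homeomorphism_def
    by (intro continuous_on_compose2[OF inM_cont[OF assms(2)]]) auto
  then have "continuous_on {0..1} (reparam h f)"
    by (rule continuous_on_cong[THEN iffD1, rotated 2]) (auto simp: reparam_def)
  moreover have "mono_on {0..1} (reparam h f)"
  proof (rule mono_onI)
    fix r s :: real assume "r \<in> {0..1}" "s \<in> {0..1}" "r \<le> s"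
    moreover from this have "h r \<le> h s"
      using assms(1) by (auto simp: incr_homeo_def intro: mono_onD)
    ultimately show "reparam h f r \<le> reparam h f s"
      using incr_homeoD(1)[OF assms(1)] inM_mono[OF assms(2)] by (simp add: reparam_def)
  qed
  ultimately show ?thesis
    using incr_homeo_endpoints[OF assms(1)] assms(2) by (simp add: inM_def reparam_def)
qed

lemma reparam_reparam:
  assumes "incr_homeo h h'"
  shows "reparam h' (reparam h f) = f"
proof
  fix t
  show "reparam h' (reparam h f) t = f t"
    using incr_homeoD[OF assms, of t] by (cases "t \<in> {0..1}") (auto simp: reparam_def)
qed

lemma reparam_image_Mset:
  assumes "incr_homeo h h'"
  shows "reparam h ` Mset = Mset"
proof
  show "reparam h ` Mset \<subseteq> Mset"
    using reparam_inM[OF assms] by auto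
  have "f \<in> reparam h ` Mset" if "inM f" for f
    using reparam_reparam[OF incr_homeo_sym[OF assms], of f] reparam_inM[OF incr_homeo_sym[OF assms] that]
    by (metis Mset_iff image_eqI)
  then show "Mset \<subseteq> reparam h ` Mset"
    by auto
qed

lemma supdist_reparam:
  assumes "incr_homeo h h'"
  shows "supdist (reparam h f) (reparam h g) = supdist f g"
proof -
  have "supdist (reparam h f) (reparam h g) = (SUP t\<in>{0..1}. (\<lambda>s. \<bar>f s - g s\<bar>) (h t))"
    unfolding supdist_def by (intro SUP_cong) (auto simp: reparam_def)
  also have "\<dots> = (SUP s\<in>h ` {0..1}. \<bar>f s - g s\<bar>)"
    by (simp add: image_image)
  also have "\<dots> = supdist f g"
    using assms by (simp add: supdist_def incr_homeo_def homeomorphism_def)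
  finally show ?thesis .
qed

lemma phiM_reparam:
  assumes "incr_homeo h h'" "inM f" "inM g" "0 \<le> a" "a \<le> 1"
  shows "phiM a (reparam h f) (reparam h g) = phiM a f g"
proof -
  obtain t where t: "t \<in> {0..1}" "reparam h f t + reparam h g t = a"
    "phiM a (reparam h f) (reparam h g) = reparam h f t"
    using phiM_witness[OF reparam_inM[OF assms(1,2)] reparam_inM[OF assms(1,3)] assms(4,5)] .
  then have "f (h t) + g (h t) = a" "phiM a (reparam h f) (reparam h g) = f (h t)"
    by (simp_all add: reparam_def)
  then show ?thesis
    using phiM_eq[OF assms(2,3) incr_homeoD(1)[OF assms(1) t(1)]] by simp
qed

lemma eval_reparam:
  assumes "incr_homeo h h'"
  shows "(\<And>i. i \<in> fv \<phi> \<Longrightarrow> inM (e i)) \<Longrightarrow> eval \<phi> (\<lambda>i. reparam h (e i)) = eval \<phi> e"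
proof (induction \<phi> arbitrary: e)
  case (Atm a i j)
  then show ?case
    using phiM_reparam[OF assms, of "e i" "e j" "real_of_rat a"]
    by (auto simp: of_rat_less_eq[symmetric] simp del: of_rat_less_eq)
next
  case (Dst i j)
  then show ?case using supdist_reparam[OF assms] by simp
next
  case (SupQ x p)
  have "eval (SupQ x p) (\<lambda>i. reparam h (e i))
      = (SUP g\<in>reparam h ` Mset. eval p ((\<lambda>i. reparam h (e i))(x := g)))"
    by (simp add: reparam_image_Mset[OF assms])
  also have "\<dots> = (SUP g\<in>Mset. eval p ((\<lambda>i. reparam h (e i))(x := reparam h g)))"
    by (simp add: image_image)
  also have "\<dots> = (SUP g\<in>Mset. eval p (\<lambda>i. reparam h ((e(x := g)) i)))"
    by (intro SUP_cong refl arg_cong[where f="eval p"]) auto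
  also have "\<dots> = (SUP g\<in>Mset. eval p (e(x := g)))"
    using SupQ.prems by (intro SUP_cong refl SupQ.IH) auto
  finally show ?case by simp
next
  case (InfQ x p)
  have "eval (InfQ x p) (\<lambda>i. reparam h (e i))
      = (INF g\<in>reparam h ` Mset. eval p ((\<lambda>i. reparam h (e i))(x := g)))"
    by (simp add: reparam_image_Mset[OF assms])
  also have "\<dots> = (INF g\<in>Mset. eval p ((\<lambda>i. reparam h (e i))(x := reparam h g)))"
    by (simp add: image_image)
  also have "\<dots> = (INF g\<in>Mset. eval p (\<lambda>i. reparam h ((e(x := g)) i)))"
    by (intro INF_cong refl arg_cong[where f="eval p"]) auto
  also have "\<dots> = (INF g\<in>Mset. eval p (e(x := g)))"
    using InfQ.prems by (intro INF_cong refl InfQ.IH) auto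
  finally show ?case by simp
qed auto

lemma incr_homeo_if_strict_mono:
  assumes "continuous_on {0..1} F" "strict_mono_on {0..1} F" "F 0 = 0" "F 1 = 1"
  obtains F' where "incr_homeo F F'"
proof -
  have m: "mono_on {0..1} F"
    using assms(2) by (rule strict_mono_on_imp_mono_on)
  have "F ` {0..1} = {0..1}"
  proof
    show "F ` {0..1} \<subseteq> {0..1}"
    proof
      fix y assume "y \<in> F ` {0..1}"
      then obtain t where "t \<in> {0..1}" "y = F t" by auto
      then show "y \<in> {0..1}"
        using mono_onD[OF m, of 0 t] mono_onD[OF m, of t 1] assms(3,4) by auto
    qed
    show "{0..1} \<subseteq> F ` {0..1}"
    proof
      fix y :: real assume "y \<in> {0..1}"
      then obtain t where "0 \<le> t" "t \<le> 1" "F t = y"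
        using IVT'[of F 0 y 1, OF _ _ _ assms(1)] assms(3,4) by auto
      then show "y \<in> F ` {0..1}" by auto
    qed
  qed
  then obtain F' where "homeomorphism {0..1} {0..1} F F'"
    using homeomorphism_compact[OF compact_Icc assms(1) _ strict_mono_on_imp_inj_on[OF assms(2)]]
    by blast
  then show thesis
    using that m by (auto simp: incr_homeo_def)
qed

lemma tuples_inM: "fs \<in> tuples n \<Longrightarrow> i < n \<Longrightarrow> inM (fs i)"
  by (simp add: tuples_def)

lemma tuple_cle:
  assumes "fs \<in> tuples n" "s \<in> {0..1}" "t \<in> {0..1}" "s \<le> t"
  shows "cle n (\<lambda>i. fs i s) (\<lambda>i. fs i t)"
  unfolding cle_def using assms inM_mono[OF tuples_inM[OF assms(1)]] by blast

lemma cle_abs_diff_le_sum: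
  fixes x y :: "nat \<Rightarrow> real"
  assumes "cle n x y \<or> cle n y x" "i < n"
  shows "\<bar>x i - y i\<bar> \<le> \<bar>(\<Sum>j<n. x j) - (\<Sum>j<n. y j)\<bar>"
  using assms(1)
proof
  assume "cle n x y"
  then have "y i - x i \<le> (\<Sum>j<n. y j - x j)" "x i \<le> y i"
    using assms(2) by (auto simp: cle_def intro!: member_le_sum)
  then show ?thesis by (simp add: sum_subtractf)
next
  assume "cle n y x"
  then have "x i - y i \<le> (\<Sum>j<n. x j - y j)" "y i \<le> x i"
    using assms(2) by (auto simp: cle_def intro!: member_le_sum)
  then show ?thesis by (simp add: sum_subtractf)
qed

lemma pt_eq_iff: "pt n x = pt n y \<longleftrightarrow> (\<forall>i<n. x i = y i)"
  by (auto simp: pt_def fun_eq_iff)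

lemma pt_cube: "x \<in> cube n \<Longrightarrow> pt n x = x"
  by (auto simp: cube_def pt_def fun_eq_iff)

lemma pt_in_cube_iff: "pt n x \<in> cube n \<longleftrightarrow> (\<forall>i<n. 0 \<le> x i \<and> x i \<le> 1)"
  by (auto simp: cube_def pt_def)

lemma cle_pt_iff: "cle n (pt n x) (pt n y) \<longleftrightarrow> cle n x y"
  by (simp add: cle_def pt_def)

lemma im_eq_image: "im n fs = (\<lambda>t. pt n (\<lambda>i. fs i t)) ` {0..1}"
  by (auto simp: im_def)

lemma im_subset_cube:
  assumes "fs \<in> tuples n"
  shows "im n fs \<subseteq> cube n"
  using inM_range[OF tuples_inM[OF assms]] by (auto simp: im_eq_image pt_in_cube_iff)

lemma im_is_chain:
  assumes "fs \<in> tuples n" "x \<in> im n fs" "y \<in> im n fs"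
  shows "cle n x y \<or> cle n y x"
proof -
  obtain s t where "s \<in> {0..1}" "t \<in> {0..1}" "x = pt n (\<lambda>i. fs i s)" "y = pt n (\<lambda>i. fs i t)"
    using assms(2,3) by (auto simp: im_eq_image)
  then show ?thesis
    using tuple_cle[OF assms(1)] by (cases "s \<le> t") (simp_all add: cle_pt_iff)
qed

definition passes_before :: "(real \<Rightarrow> real) \<Rightarrow> real \<Rightarrow> (real \<Rightarrow> real) \<Rightarrow> real \<Rightarrow> bool" where
  "passes_before f a g b \<longleftrightarrow> (\<exists>t\<in>{0..1}. a < f t \<and> g t < b)"

lemma inM_first_reach:
  assumes "inM f" "x \<le> 1"
  shows "\<exists>l\<in>{0..1}. x \<le> f l \<and> (\<forall>t\<in>{0..1}. t < l \<longrightarrow> f t < x)"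
proof -
  define S where "S = {0..1} \<inter> f -` {x..}"
  have "closed S"
    unfolding S_def using inM_cont[OF assms(1)] by (rule continuous_closed_preimage) auto
  moreover have "1 \<in> S" "bdd_below S"
    using assms by (auto simp: S_def inM_1 intro: bdd_belowI[of _ 0])
  ultimately have "Inf S \<in> S"
    using closed_contains_Inf by blast
  moreover have "f t < x" if "t \<in> {0..1}" "t < Inf S" for t
    using that cInf_lower[OF _ \<open>bdd_below S\<close>, of t] by (force simp: S_def)
  ultimately show ?thesis
    by (auto simp: S_def)
qed

lemma inM_last_below:
  assumes "inM f" "0 \<le> x"
  shows "\<exists>h\<in>{0..1}. f h \<le> x \<and> (\<forall>t\<in>{0..1}. h < t \<longrightarrow> x < f t)"
proof -
  define S where "S = {0..1} \<inter> f -` {..x}"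
  have "closed S"
    unfolding S_def using inM_cont[OF assms(1)] by (rule continuous_closed_preimage) auto
  moreover have "0 \<in> S" "bdd_above S"
    using assms by (auto simp: S_def inM_0 intro: bdd_aboveI[of _ 1])
  ultimately have "Sup S \<in> S"
    using closed_contains_Sup by blast
  moreover have "x < f t" if "t \<in> {0..1}" "Sup S < t" for t
    using that cSup_upper[OF _ \<open>bdd_above S\<close>, of t] by (force simp: S_def)
  ultimately show ?thesis
    by (auto simp: S_def)
qed

lemma not_passes_before_on_im:
  assumes fs: "fs \<in> tuples n" and ij: "i < n" "j < n" and t: "t \<in> {0..1}"
  shows "\<not> passes_before (fs i) (fs i t) (fs j) (fs j t)"
proof
  assume "passes_before (fs i) (fs i t) (fs j) (fs j t)"
  then obtain s where "s \<in> {0..1}" "fs i t < fs i s" "fs j s < fs j t"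
    by (auto simp: passes_before_def)
  then show False
    using inM_mono[OF tuples_inM[OF fs ij(1)], of s t] inM_mono[OF tuples_inM[OF fs ij(2)], of t s] t
    by (cases "s \<le> t") auto
qed

lemma passes_before_if_above_before_reach:
  assumes f: "inM f" and "0 \<le> a" "t \<in> {0..1}" "a < f t"
    and below: "\<And>s. s \<in> {0..1} \<Longrightarrow> s < t \<Longrightarrow> g s < b"
  shows "passes_before f a g b"
proof -
  obtain h where h: "h \<in> {0..1}" "f h \<le> a" "\<And>s. s \<in> {0..1} \<Longrightarrow> h < s \<Longrightarrow> a < f s"
    using inM_last_below[OF f \<open>0 \<le> a\<close>] by blast
  have "h < t"
    using inM_mono[OF f \<open>t \<in> {0..1}\<close> h(1)] h(2) \<open>a < f t\<close> by force
  then have "(h + t) / 2 \<in> {0..1}" "h < (h + t) / 2" "(h + t) / 2 < t"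
    using h(1) \<open>t \<in> {0..1}\<close> by auto
  then show ?thesis
    unfolding passes_before_def using h(3) below by blast
qed

lemma mem_im_if_not_passes_before:
  assumes n: "0 < n" and fs: "fs \<in> tuples n" and x: "x \<in> cube n"
    and np: "\<And>i j. i < n \<Longrightarrow> j < n \<Longrightarrow> \<not> passes_before (fs i) (x i) (fs j) (x j)"
  shows "x \<in> im n fs"
proof -
  have x01: "0 \<le> x i" "x i \<le> 1" if "i < n" for i
    using x that by (auto simp: cube_def)
  have "\<forall>i\<in>{..<n}. \<exists>l\<in>{0..1}. x i \<le> fs i l \<and> (\<forall>t\<in>{0..1}. t < l \<longrightarrow> fs i t < x i)"
    using inM_first_reach[OF tuples_inM[OF fs] x01(2)] by blast
  then obtain l where l: "\<And>i. i < n \<Longrightarrow> l i \<in> {0..1} \<and> x i \<le> fs i (l i)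
      \<and> (\<forall>t\<in>{0..1}. t < l i \<longrightarrow> fs i t < x i)"
    by (metis bchoice lessThan_iff)
  \<comment> \<open>the first time at which every coordinate has reached its target\<close>
  define t where "t = Max (l ` {..<n})"
  have "t \<in> l ` {..<n}"
    unfolding t_def using n by (intro Max_in) auto
  then obtain k where k: "k < n" "t = l k"
    by auto
  have t01: "t \<in> {0..1}"
    using l k by simp
  have "fs j t = x j" if j: "j < n" for j
  proof (rule antisym)
    show "x j \<le> fs j t"
      using l[OF j] Max_lessThan_ge[OF j, of l] t01 inM_mono[OF tuples_inM[OF fs j]]
      unfolding t_def by (meson order_trans)
    show "fs j t \<le> x j"
      using passes_before_if_above_before_reach[OF tuples_inM[OF fs j] x01(1)[OF j] t01, of "fs k" "x k"]
        np[OF j k(1)] l[OF k(1)] k(2) by force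
  qed
  then have "x = pt n (\<lambda>i. fs i t)"
    using pt_cube[OF x] pt_eq_iff[of n x] by metis
  then show "x \<in> im n fs"
    using t01 by (auto simp: im_eq_image)
qed

lemma mem_im_iff:
  assumes n: "0 < n" and fs: "fs \<in> tuples n" and x: "x \<in> cube n"
  shows "x \<in> im n fs \<longleftrightarrow> (\<forall>i<n. \<forall>j<n. \<not> passes_before (fs i) (x i) (fs j) (x j))"
proof
  assume "x \<in> im n fs"
  then obtain t where "t \<in> {0..1}" "x = pt n (\<lambda>i. fs i t)"
    by (auto simp: im_eq_image)
  then show "\<forall>i<n. \<forall>j<n. \<not> passes_before (fs i) (x i) (fs j) (x j)"
    using not_passes_before_on_im[OF fs] by (simp add: pt_def)
qed (use mem_im_if_not_passes_before[OF assms] in blast)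

section \<open>The type determines the image\<close>

lemma ramp_inM:
  assumes "0 \<le> t" "t < t'" "t' \<le> 1"
  shows "inM (\<lambda>s. max 0 (min 1 ((s - t) / (t' - t))))"
  unfolding inM_def
proof (intro conjI)
  show "continuous_on {0..1} (\<lambda>s. max 0 (min 1 ((s - t) / (t' - t))))"
    using assms by (intro continuous_intros) auto
  show "mono_on {0..1} (\<lambda>s. max 0 (min 1 ((s - t) / (t' - t))))"
    using assms by (intro mono_onI max.mono min.mono divide_right_mono) auto
qed (use assms in \<open>auto simp: divide_nonpos_pos le_divide_eq\<close>)

lemma inM_stays_below:
  assumes "inM g" "t \<in> {0..<1}" "g t < b"
  obtains t' where "t < t'" "t' \<le> 1" "g t' < b"
proof -
  obtain d where d: "0 < d" "\<And>s. s \<in> {0..1} \<Longrightarrow> dist s t < d \<Longrightarrow> dist (g s) (g t) < b - g t"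
    using inM_cont[OF assms(1)] assms(2,3) unfolding continuous_on_iff
    by (metis atLeastLessThan_iff atLeastAtMost_iff diff_gt_0_iff_gt less_eq_real_def)
  define t' where "t' = min 1 (t + d / 2)"
  have "t < t'" "t' \<le> 1" "t' \<in> {0..1}" "dist t' t < d"
    using assms(2) d(1) by (auto simp: t'_def dist_real_def)
  then show thesis
    using that d(2)[of t'] by (auto simp: dist_real_def)
qed

lemma passes_before_iff_phiM:
  assumes f: "inM f" and g: "inM g" and abc: "0 \<le> a" "0 \<le> b" "0 < c" "a + c \<le> 1" "b + c \<le> 1"
  shows "passes_before f a g b \<longleftrightarrow> (\<exists>y. inM y \<and> a < phiM (a + c) f y \<and> phiM (b + c) g y < b)"
proof
  assume "passes_before f a g b"
  then obtain t where t: "t \<in> {0..1}" "a < f t" "g t < b"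
    unfolding passes_before_def by blast
  have "b < 1" "c < 1"
    using abc inM_range[OF g t(1)] t(3) by linarith+
  then have "t \<noteq> 1"
    using t(3) inM_1[OF g] by auto
  then obtain t' where t': "t < t'" "t' \<le> 1" "g t' < b"
    using inM_stays_below[OF g _ t(3)] t(1) by auto
  define y where "y s = max 0 (min 1 ((s - t) / (t' - t)))" for s
  have y: "inM y" "y t = 0" "y t' = 1"
    using ramp_inM[of t t'] t(1) t' unfolding y_def by auto
  have "a < phiM (a + c) f y"
    using phiM_gt_iff[OF f y(1), of "a + c" a] abc t y(2) by auto
  moreover have "phiM (b + c) g y < b"
    using phiM_less_iff[OF g y(1), of "b + c" b] abc t t' y(3) \<open>c < 1\<close> by force
  ultimately show "\<exists>y. inM y \<and> a < phiM (a + c) f y \<and> phiM (b + c) g y < b"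
    using y(1) by blast
next
  assume "\<exists>y. inM y \<and> a < phiM (a + c) f y \<and> phiM (b + c) g y < b"
  then obtain y where y: "inM y" "a < phiM (a + c) f y" "phiM (b + c) g y < b"
    by blast
  obtain s where s: "s \<in> {0..1}" "a < f s" "y s < c"
    using y(2) phiM_gt_iff[OF f y(1), of "a + c" a] abc by auto
  obtain t where t: "t \<in> {0..1}" "g t < b" "c < y t"
    using y(3) phiM_less_iff[OF g y(1), of "b + c" b] abc by auto
  have "s \<le> t"
    using inM_mono[OF y(1) t(1) s(1)] s t by linarith
  then show "passes_before f a g b"
    using inM_mono[OF f s(1) t(1)] s t unfolding passes_before_def by (intro bexI[of _ t]) auto
qed

(* phi_2q(x, x) = q and 1 - phi_(2-2q)(x, x) = q: any variable defines the constant q *)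
definition const_form :: "nat \<Rightarrow> rat \<Rightarrow> form" where
  "const_form i q = (if q \<le> 1/2 then Atm (2 * q) i i else Neg (Atm (2 - 2 * q) i i))"

definition min_form :: "form \<Rightarrow> form \<Rightarrow> form" where
  "min_form p q = Minus p (Minus p q)"

definition passes_form :: "nat \<Rightarrow> nat \<Rightarrow> rat \<Rightarrow> rat \<Rightarrow> rat \<Rightarrow> nat \<Rightarrow> form" where
  "passes_form i j a b c y = SupQ y
     (min_form (Minus (Atm (a + c) i y) (const_form i a)) (Minus (const_form i b) (Atm (b + c) j y)))"

lemma fv_const_form: "fv (const_form i q) = {i}"
  by (simp add: const_form_def)

lemma fv_passes_form: "i \<noteq> y \<Longrightarrow> j \<noteq> y \<Longrightarrow> fv (passes_form i j a b c y) = {i, j}"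
  by (auto simp: passes_form_def min_form_def fv_const_form)

lemma eval_const_form:
  assumes "inM (e i)" "0 \<le> q" "q \<le> 1"
  shows "eval (const_form i q) e = real_of_rat q"
proof (cases "q \<le> 1/2")
  case True
  then have "0 \<le> real_of_rat (2 * q)" "real_of_rat (2 * q) \<le> 1"
    using assms(2) by (simp_all add: of_rat_less_eq[symmetric] del: of_rat_less_eq)
  then obtain t where "e i t + e i t = real_of_rat (2 * q)" "phiM (real_of_rat (2 * q)) (e i) (e i) = e i t"
    using phiM_witness[OF assms(1) assms(1)] by metis
  then show ?thesis
    using True assms by (simp add: const_form_def of_rat_mult)
next
  case False
  then have "0 \<le> real_of_rat (2 - 2 * q)" "real_of_rat (2 - 2 * q) \<le> 1"
    using assms(3) by (simp_all add: of_rat_less_eq[symmetric] del: of_rat_less_eq)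
  then obtain t where "e i t + e i t = real_of_rat (2 - 2 * q)"
      "phiM (real_of_rat (2 - 2 * q)) (e i) (e i) = e i t"
    using phiM_witness[OF assms(1) assms(1)] by metis
  then show ?thesis
    using False assms by (simp add: const_form_def of_rat_mult of_rat_diff)
qed

lemma eval_passes_form_pos_iff:
  assumes fs: "fs \<in> tuples n" and ij: "i < n" "j < n"
    and abc: "0 \<le> a" "0 \<le> b" "0 < c" "a + c \<le> 1" "b + c \<le> 1"
  shows "0 < eval (passes_form i j a b c n) fs
    \<longleftrightarrow> passes_before (fs i) (real_of_rat a) (fs j) (real_of_rat b)"
proof -
  define a' b' c' where "a' = real_of_rat a" "b' = real_of_rat b" "c' = real_of_rat c"
  have abc': "0 \<le> a'" "0 \<le> b'" "0 < c'" "a' + c' \<le> 1" "b' + c' \<le> 1"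
    using abc unfolding a'_b'_c'_def
    by (simp_all add: of_rat_add[symmetric] of_rat_less_eq[symmetric] of_rat_less[symmetric]
        del: of_rat_less_eq of_rat_less)
  have fi: "inM (fs i)" and fj: "inM (fs j)"
    using fs ij by (auto intro: tuples_inM)
  define body where "body = min_form (Minus (Atm (a + c) i n) (const_form i a))
    (Minus (const_form i b) (Atm (b + c) j n))"
  have body: "eval body (fs(n := y)) = min (max (phiM (a' + c') (fs i) y - a') 0)
      (max (b' - phiM (b' + c') (fs j) y) 0)" if "inM y" for y
    using ij abc fi eval_const_form[of "fs(n := y)" i a] eval_const_form[of "fs(n := y)" i b]
    by (auto simp: body_def min_form_def a'_b'_c'_def of_rat_add min_def max_def)
  have bdd: "bdd_above ((\<lambda>y. eval body (fs(n := y))) ` Mset)"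
    using fi fj by (intro eval_quantified_bdd) (auto simp: body_def min_form_def fv_const_form)
  have "0 < eval (passes_form i j a b c n) fs \<longleftrightarrow> (\<exists>y. inM y \<and> 0 < eval body (fs(n := y)))"
    unfolding passes_form_def body_def[symmetric] eval.simps
    using less_cSUP_iff[OF Mset_nonempty bdd, of 0] by (simp add: Bex_def)
  also have "\<dots> \<longleftrightarrow> (\<exists>y. inM y \<and> a' < phiM (a' + c') (fs i) y \<and> phiM (b' + c') (fs j) y < b')"
    using body by (auto simp: less_max_iff_disj)
  also have "\<dots> \<longleftrightarrow> passes_before (fs i) a' (fs j) b'"
    using passes_before_iff_phiM[OF fi fj abc'] by simp
  finally show ?thesis
    unfolding a'_b'_c'_def .
qed

lemma passes_before_transfer:
  assumes fs: "fs \<in> tuples n" and gs: "gs \<in> tuples n" and tp: "tp n fs = tp n gs"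
    and ij: "i < n" "j < n" and ab: "0 \<le> a" "b \<le> 1"
    and "passes_before (fs i) a (fs j) b"
  shows "passes_before (gs i) a (gs j) b"
proof -
  obtain t where t: "t \<in> {0..1}" "a < fs i t" "fs j t < b"
    using assms(8) unfolding passes_before_def by blast
  obtain qa where qa: "a < real_of_rat qa" "real_of_rat qa < fs i t"
    using Rats_dense_in_real[OF t(2)] by (auto elim: Rats_cases)
  obtain qb where qb: "fs j t < real_of_rat qb" "real_of_rat qb < b"
    using Rats_dense_in_real[OF t(3)] by (auto elim: Rats_cases)
  have "0 \<le> real_of_rat qa" "real_of_rat qa < 1" "0 \<le> real_of_rat qb" "real_of_rat qb < 1"
    using qa qb ab inM_range[OF tuples_inM[OF fs ij(1)] t(1)] inM_range[OF tuples_inM[OF fs ij(2)] t(1)]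
    by linarith+
  then have q: "0 \<le> qa" "qa < 1" "0 \<le> qb" "qb < 1"
    by (simp_all add: of_rat_less_eq[symmetric] of_rat_less[symmetric] del: of_rat_less_eq of_rat_less)
  define qc where "qc = (1 - max qa qb) / 2"
  have qc: "0 < qc" "qa + qc \<le> 1" "qb + qc \<le> 1"
    using q unfolding qc_def by (auto simp: max_def field_simps)
  have "fv (passes_form i j qa qb qc n) \<subseteq> {..<n}"
    using ij by (subst fv_passes_form) auto
  then have "eval (passes_form i j qa qb qc n) fs = eval (passes_form i j qa qb qc n) gs"
    using fun_cong[OF tp, of "passes_form i j qa qb qc n"] by (simp add: tp_def)
  moreover have "passes_before (fs i) (real_of_rat qa) (fs j) (real_of_rat qb)"
    using t qa qb unfolding passes_before_def by blast
  ultimately have "passes_before (gs i) (real_of_rat qa) (gs j) (real_of_rat qb)"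
    using eval_passes_form_pos_iff[OF fs ij q(1,3) qc] eval_passes_form_pos_iff[OF gs ij q(1,3) qc]
    by simp
  then show ?thesis
    using qa qb unfolding passes_before_def by force
qed

lemma im_eq_if_tp_eq:
  assumes n: "0 < n" and fs: "fs \<in> tuples n" and gs: "gs \<in> tuples n" and tp: "tp n fs = tp n gs"
  shows "im n fs = im n gs"
proof -
  have "x \<in> im n fs \<longleftrightarrow> x \<in> im n gs" if x: "x \<in> cube n" for x
  proof -
    have "x i \<in> {0..1}" if "i < n" for i
      using x that by (simp add: cube_def)
    then have "passes_before (fs i) (x i) (fs j) (x j) \<longleftrightarrow> passes_before (gs i) (x i) (gs j) (x j)"
      if "i < n" "j < n" for i j
      using passes_before_transfer[OF fs gs tp that] passes_before_transfer[OF gs fs tp[symmetric] that]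
        that by auto
    then show ?thesis
      unfolding mem_im_iff[OF n fs x] mem_im_iff[OF n gs x] by blast
  qed
  then show ?thesis
    using im_subset_cube[OF fs] im_subset_cube[OF gs] by blast
qed

section \<open>The image determines the type\<close>

lemma tuple_mixed_sum_incr_homeo:
  assumes n: "0 < n" and fs: "fs \<in> tuples n" and e: "0 < e" "e < 1"
  obtains F' where "incr_homeo (\<lambda>t. (1 - e) * (\<Sum>i<n. fs i t) / n + e * t) F'"
proof (rule incr_homeo_if_strict_mono)
  have "continuous_on {0..1} (fs i)" if "i \<in> {..<n}" for i
    using that fs by (auto intro: inM_cont tuples_inM)
  then show "continuous_on {0..1} (\<lambda>t. (1 - e) * (\<Sum>i<n. fs i t) / n + e * t)"
    using n by (intro continuous_intros) auto
  show "strict_mono_on {0..1} (\<lambda>t. (1 - e) * (\<Sum>i<n. fs i t) / n + e * t)"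
  proof (rule strict_mono_onI)
    fix r s :: real assume rs: "r \<in> {0..1}" "s \<in> {0..1}" "r < s"
    have "(\<Sum>i<n. fs i r) \<le> (\<Sum>i<n. fs i s)"
      using rs inM_mono[OF tuples_inM[OF fs]] by (intro sum_mono) auto
    then have "(1 - e) * (\<Sum>i<n. fs i r) / n \<le> (1 - e) * (\<Sum>i<n. fs i s) / n"
      using e by (intro divide_right_mono mult_left_mono) auto
    moreover have "e * r < e * s"
      using rs e by simp
    ultimately show "(1 - e) * (\<Sum>i<n. fs i r) / n + e * r < (1 - e) * (\<Sum>i<n. fs i s) / n + e * s"
      by linarith
  qed
  show "(1 - e) * (\<Sum>i<n. fs i 0) / n + e * 0 = 0" "(1 - e) * (\<Sum>i<n. fs i 1) / n + e * 1 = 1"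
    using fs n by (simp_all add: inM_0 inM_1 tuples_inM)
qed

lemma mixed_sum_eq_diff_bound:
  fixes a b e s t :: real and n :: nat
  assumes "0 < n" "0 < e" "e \<le> 1/2" "s \<in> {0..1}" "t \<in> {0..1}"
    and "(1 - e) * a / n + e * s = (1 - e) * b / n + e * t"
  shows "\<bar>a - b\<bar> \<le> 2 * n * e"
proof -
  have "(1 - e) * (a - b) = n * e * (t - s)"
    using assms(1,6) by (simp add: field_simps)
  then have "a - b = n * e * (t - s) / (1 - e)"
    using assms(3) by (simp add: field_simps)
  then have "\<bar>a - b\<bar> = n * e * \<bar>t - s\<bar> / (1 - e)"
    using assms(2,3) by (simp add: abs_mult)
  also have "\<dots> \<le> n * e * 1 / (1 - e)"
    using assms(2-5) by (intro divide_right_mono mult_left_mono) auto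
  also have "\<dots> \<le> 2 * n * e"
    using assms(2,3) mult_left_mono[of 1 "2 * (1 - e)" "n * e"] by (simp add: divide_le_eq algebra_simps)
  finally show ?thesis .
qed

lemma reparams_close_if_im_eq:
  assumes n: "0 < n" and fs: "fs \<in> tuples n" and gs: "gs \<in> tuples n" and im: "im n fs = im n gs"
    and "0 < d"
  obtains F F' G G' where "incr_homeo F F'" "incr_homeo G G'"
    "\<And>i. i < n \<Longrightarrow> supdist (reparam F (fs i)) (reparam G (gs i)) \<le> d"
proof -
  define e where "e = min (1/2) (d / (2 * n))"
  have e: "0 < e" "e \<le> 1/2" "2 * n * e \<le> d"
    using n \<open>0 < d\<close> by (auto simp: e_def min_def field_simps)
  define S where "S hs t = (1 - e) * (\<Sum>i<n. hs i t) / n + e * t" for hs :: "nat \<Rightarrow> real \<Rightarrow> real" and t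
  obtain F' G' where F': "incr_homeo (S fs) F'" and G': "incr_homeo (S gs) G'"
    using tuple_mixed_sum_incr_homeo[OF n fs, of e] tuple_mixed_sum_incr_homeo[OF n gs, of e] e
    unfolding S_def by force
  \<comment> \<open>after reparametrisation both tuples have the same mixed sum S, which pins each coordinate down up to d\<close>
  have "\<bar>fs i (F' u) - gs i (G' u)\<bar> \<le> d" if i: "i < n" and u: "u \<in> {0..1}" for i u
  proof -
    define s t where "s = F' u" "t = G' u"
    have st: "s \<in> {0..1}" "t \<in> {0..1}" "S fs s = S gs t"
      using incr_homeoD[OF F' u] incr_homeoD[OF G' u] by (simp_all add: s_t_def)
    have "pt n (\<lambda>j. fs j s) \<in> im n gs"
      using im st(1) by (auto simp: im_eq_image)
    then obtain r where r: "r \<in> {0..1}" "pt n (\<lambda>j. fs j s) = pt n (\<lambda>j. gs j r)"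
      by (auto simp: im_eq_image)
    have fs_gs: "fs j s = gs j r" if "j < n" for j
      using r(2) that by (simp add: pt_eq_iff)
    have "(\<Sum>j<n. fs j s) = (\<Sum>j<n. gs j r)"
      using fs_gs by simp
    then have "\<bar>(\<Sum>j<n. gs j r) - (\<Sum>j<n. gs j t)\<bar> \<le> 2 * n * e"
      using mixed_sum_eq_diff_bound[OF n e(1,2) st(1,2)] st(3) by (simp add: S_def)
    then have "\<bar>(\<Sum>j<n. gs j r) - (\<Sum>j<n. gs j t)\<bar> \<le> d"
      using e(3) by linarith
    moreover have "\<bar>gs i r - gs i t\<bar> \<le> \<bar>(\<Sum>j<n. gs j r) - (\<Sum>j<n. gs j t)\<bar>"
      using tuple_cle[OF gs r(1) st(2)] tuple_cle[OF gs st(2) r(1)] i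
      by (intro cle_abs_diff_le_sum) linarith+
    ultimately show ?thesis
      using fs_gs[OF i] by (simp add: s_t_def)
  qed
  then have "supdist (reparam F' (fs i)) (reparam G' (gs i)) \<le> d" if "i < n" for i
    using that by (intro supdist_le) (simp add: reparam_def)
  then show thesis
    using that[OF incr_homeo_sym[OF F'] incr_homeo_sym[OF G']] by blast
qed

lemma tp_eq_if_im_eq:
  assumes n: "0 < n" and fs: "fs \<in> tuples n" and gs: "gs \<in> tuples n" and im: "im n fs = im n gs"
  shows "tp n fs = tp n gs"
proof
  fix \<phi>
  show "tp n fs \<phi> = tp n gs \<phi>"
  proof (cases "fv \<phi> \<subseteq> {..<n}")
    case True
    then have fs\<phi>: "\<And>i. i \<in> fv \<phi> \<Longrightarrow> inM (fs i)" and gs\<phi>: "\<And>i. i \<in> fv \<phi> \<Longrightarrow> inM (gs i)"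
      using fs gs by (auto intro: tuples_inM)
    have "\<bar>eval \<phi> fs - eval \<phi> gs\<bar> \<le> 0 + d" if "0 < d" for d
    proof -
      define d' where "d' = d / (lip_const \<phi> + 1)"
      have "0 < d'"
        using that lip_const_nonneg[of \<phi>] by (simp add: d'_def)
      then obtain F F' G G' where F: "incr_homeo F F'" and G: "incr_homeo G G'"
        and close: "\<And>i. i < n \<Longrightarrow> supdist (reparam F (fs i)) (reparam G (gs i)) \<le> d'"
        using reparams_close_if_im_eq[OF n fs gs im] by metis
      have "eval \<phi> fs = eval \<phi> (\<lambda>i. reparam F (fs i))" "eval \<phi> gs = eval \<phi> (\<lambda>i. reparam G (gs i))"
        using eval_reparam[OF F fs\<phi>] eval_reparam[OF G gs\<phi>] by simp_all
      moreover have "\<bar>eval \<phi> (\<lambda>i. reparam F (fs i)) - eval \<phi> (\<lambda>i. reparam G (gs i))\<bar> \<le> lip_const \<phi> * d'"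
        using True \<open>0 < d'\<close> close reparam_inM[OF F fs\<phi>] reparam_inM[OF G gs\<phi>]
        by (intro eval_lipschitz) auto
      moreover have "lip_const \<phi> * d' \<le> d"
        using that lip_const_nonneg[of \<phi>] by (simp add: d'_def field_simps)
      ultimately show ?thesis
        by simp
    qed
    then have "eval \<phi> fs = eval \<phi> gs"
      using field_le_epsilon[of "\<bar>eval \<phi> fs - eval \<phi> gs\<bar>" 0] by simp
    then show ?thesis
      using True by (simp add: tp_def)
  qed (simp add: tp_def)
qed

section \<open>Images are exactly the connected chains\<close>

lemma im_in_conn_chains:
  assumes fs: "fs \<in> tuples n"
  shows "im n fs \<in> conn_chains n"
proof -
  have "pt n (\<lambda>i. fs i 0) = pt n (\<lambda>_. 0)" "pt n (\<lambda>i. fs i 1) = pt n (\<lambda>_. 1)"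
    using fs by (simp_all add: pt_eq_iff inM_0 inM_1 tuples_inM)
  then have ends: "pt n (\<lambda>_. 0) \<in> im n fs" "pt n (\<lambda>_. 1) \<in> im n fs"
    by (auto simp: im_eq_image intro: image_eqI[where x=0] image_eqI[where x=1])
  have "continuous_on {0..1} (\<lambda>t. pt n (\<lambda>i. fs i t))"
  proof (rule continuous_on_coordinatewise_then_product)
    fix i
    show "continuous_on {0..1} (\<lambda>t. pt n (\<lambda>i. fs i t) i)"
      using fs by (cases "i < n") (simp_all add: pt_def inM_cont tuples_inM)
  qed
  then have "connected (im n fs)"
    unfolding im_eq_image by (rule connected_continuous_image) simp
  then show ?thesis
    using im_subset_cube[OF fs] im_is_chain[OF fs] ends
    by (simp add: conn_chains_def is_chain01_def)
qed

lemma chain_eq_if_sum_eq: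
  assumes "x \<in> cube n" "y \<in> cube n" "cle n x y \<or> cle n y x" "(\<Sum>i<n. x i) = (\<Sum>i<n. y i)"
  shows "x = y"
proof -
  have "x i = y i" if "i < n" for i
    using cle_abs_diff_le_sum[OF assms(3) that] assms(4) by simp
  then show ?thesis
    using pt_cube[OF assms(1)] pt_cube[OF assms(2)] pt_eq_iff[of n x y] by metis
qed

lemma cube_sum_bounds:
  assumes "x \<in> cube n"
  shows "0 \<le> (\<Sum>i<n. x i)" "(\<Sum>i<n. x i) \<le> n"
proof -
  have x01: "0 \<le> x i \<and> x i \<le> 1" if "i \<in> {..<n}" for i
    using assms that by (auto simp: cube_def)
  then show "0 \<le> (\<Sum>i<n. x i)"
    by (meson sum_nonneg)
  have "(\<Sum>i<n. x i) \<le> (\<Sum>i<n. 1)"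
    using x01 by (meson sum_mono)
  then show "(\<Sum>i<n. x i) \<le> n"
    by simp
qed

lemma conn_chain_sum_covers:
  assumes n: "0 < n" and C: "C \<in> conn_chains n"
  shows "{0..1} \<subseteq> (\<lambda>x. (\<Sum>i<n. x i) / n) ` C"
proof (rule connected_contains_Icc)
  have "continuous_on C (\<lambda>x. x i)" for i
    by (rule continuous_on_subset[OF continuous_on_product_coordinates]) simp
  then have "continuous_on C (\<lambda>x. (\<Sum>i<n. x i) / n)"
    using n by (intro continuous_intros) auto
  then show "connected ((\<lambda>x. (\<Sum>i<n. x i) / n) ` C)"
    using C by (intro connected_continuous_image) (auto simp: conn_chains_def)
  have ends: "pt n (\<lambda>_. 0) \<in> C" "pt n (\<lambda>_. 1) \<in> C"
    using C by (auto simp: conn_chains_def is_chain01_def)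
  have sums: "0 = (\<Sum>i<n. pt n (\<lambda>_. 0) i) / n" "1 = (\<Sum>i<n. pt n (\<lambda>_. 1) i) / n"
    using n by (simp_all add: pt_def)
  show "0 \<in> (\<lambda>x. (\<Sum>i<n. x i) / n) ` C"
    by (rule image_eqI[where f="\<lambda>x. (\<Sum>i<n. x i) / n", OF sums(1) ends(1)])
  show "1 \<in> (\<lambda>x. (\<Sum>i<n. x i) / n) ` C"
    by (rule image_eqI[where f="\<lambda>x. (\<Sum>i<n. x i) / n", OF sums(2) ends(2)])
qed

lemma conn_chain_sum_param:
  assumes n: "0 < n" and C: "C \<in> conn_chains n"
  obtains c :: "real \<Rightarrow> nat \<Rightarrow> real"
  where "\<And>t::real. t \<in> {0..1} \<Longrightarrow> c t \<in> C \<and> (\<Sum>i<n. c t i) = n * t" "C \<subseteq> c ` {0..1}"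
proof -
  have sub: "C \<subseteq> cube n" and chain: "\<And>x y. x \<in> C \<Longrightarrow> y \<in> C \<Longrightarrow> cle n x y \<or> cle n y x"
    using C by (auto simp: conn_chains_def is_chain01_def)
  define \<sigma> where "\<sigma> x = (\<Sum>i<n. x i) / n" for x :: "nat \<Rightarrow> real"
  have "t \<in> \<sigma> ` C" if "t \<in> {0..1}" for t
    using conn_chain_sum_covers[OF n C] that unfolding \<sigma>_def by blast
  then have "inv_into C \<sigma> t \<in> C" "\<sigma> (inv_into C \<sigma> t) = t" if "t \<in> {0..1}" for t
    using inv_into_into f_inv_into_f that by metis+
  then have c: "inv_into C \<sigma> t \<in> C \<and> (\<Sum>i<n. inv_into C \<sigma> t i) = n * t" if "t \<in> {0..1}" for t :: real
    using that n by (simp add: \<sigma>_def divide_eq_eq mult.commute)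
  have "inj_on \<sigma> C"
  proof (rule inj_onI)
    fix x y assume "x \<in> C" "y \<in> C" "\<sigma> x = \<sigma> y"
    then show "x = y"
      using chain_eq_if_sum_eq[of x n y] sub chain n by (auto simp: \<sigma>_def)
  qed
  have "x \<in> inv_into C \<sigma> ` {0..1}" if "x \<in> C" for x
  proof -
    have "\<sigma> x \<in> {0..1}"
      using cube_sum_bounds[of x n] sub that n by (auto simp: \<sigma>_def)
    moreover have "x = inv_into C \<sigma> (\<sigma> x)"
      using inv_into_f_f[OF \<open>inj_on \<sigma> C\<close> that] by simp
    ultimately show ?thesis
      by (rule image_eqI[rotated])
  qed
  then have "C \<subseteq> inv_into C \<sigma> ` {0..1}"
    by (rule subsetI)
  with c show thesis
    by (rule that)
qed

context
  fixes n :: nat and C :: "(nat \<Rightarrow> real) set" and c :: "real \<Rightarrow> nat \<Rightarrow> real"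
  assumes n: "0 < n" and C: "is_chain01 n C"
    and c: "\<And>t::real. t \<in> {0..1} \<Longrightarrow> c t \<in> C \<and> (\<Sum>i<n. c t i) = n * t"
begin

lemma chain_param_lipschitz:
  assumes "i < n"
  shows "(real n)-lipschitz_on {0..1} (\<lambda>t. c t i)"
proof (rule lipschitz_onI)
  fix s t :: real assume st: "s \<in> {0..1}" "t \<in> {0..1}"
  have "\<bar>c s i - c t i\<bar> \<le> \<bar>(\<Sum>j<n. c s j) - (\<Sum>j<n. c t j)\<bar>"
    using C c st assms by (intro cle_abs_diff_le_sum) (auto simp: is_chain01_def)
  also have "\<dots> = n * \<bar>s - t\<bar>"
    using c st by (simp add: right_diff_distrib[symmetric] abs_mult)
  finally show "dist (c s i) (c t i) \<le> n * dist s t"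
    by (simp add: dist_real_def)
qed simp

lemma chain_param_mono:
  assumes "i < n"
  shows "mono_on {0..1} (\<lambda>t. c t i)"
proof (rule mono_onI)
  fix s t :: real assume st: "s \<in> {0..1}" "t \<in> {0..1}" "s \<le> t"
  show "c s i \<le> c t i"
  proof (cases "cle n (c s) (c t)")
    case False
    moreover have "c s \<in> C" "c t \<in> C"
      using c st by auto
    ultimately have "cle n (c t) (c s)"
      using C by (auto simp: is_chain01_def)
    then have "(\<Sum>j<n. c t j) \<le> (\<Sum>j<n. c s j)"
      by (auto simp: cle_def intro: sum_mono)
    then have "s = t"
      using c st n by simp
    then show ?thesis by simp
  qed (use assms in \<open>simp add: cle_def\<close>)
qed

lemma chain_param_endpoints:
  assumes "i < n"
  shows "c 0 i = 0" "c 1 i = 1"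
proof -
  have c01: "c 0 \<in> C" "c 1 \<in> C" "(\<Sum>j<n. c 0 j) = 0" "(\<Sum>j<n. c 1 j) = n"
    using c[of 0] c[of 1] by auto
  have ends: "pt n (\<lambda>_. 0) \<in> C" "pt n (\<lambda>_. 1) \<in> C"
    and chain: "\<And>x y. x \<in> C \<Longrightarrow> y \<in> C \<Longrightarrow> cle n x y \<or> cle n y x"
    using C by (auto simp: is_chain01_def)
  have "(\<Sum>j<n. pt n (\<lambda>_. 0) j) = 0" "(\<Sum>j<n. pt n (\<lambda>_. 1) j) = n"
    "pt n (\<lambda>_. 0) i = 0" "pt n (\<lambda>_. 1) i = 1"
    using assms by (simp_all add: pt_def)
  then show "c 0 i = 0" "c 1 i = 1"
    using cle_abs_diff_le_sum[OF chain[OF c01(1) ends(1)] assms]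
      cle_abs_diff_le_sum[OF chain[OF c01(2) ends(2)] assms] c01(3,4)
    by simp_all
qed

lemma chain_param_inM: "i < n \<Longrightarrow> inM (\<lambda>t. c t i)"
  unfolding inM_def
  using lipschitz_on_continuous_on[OF chain_param_lipschitz] chain_param_mono chain_param_endpoints
  by blast

end

lemma conn_chain_eq_im:
  assumes n: "0 < n" and C: "C \<in> conn_chains n"
  obtains fs where "fs \<in> tuples n" "im n fs = C"
proof -
  obtain c :: "real \<Rightarrow> nat \<Rightarrow> real"
    where c: "\<And>t::real. t \<in> {0..1} \<Longrightarrow> c t \<in> C \<and> (\<Sum>i<n. c t i) = n * t" and onto: "C \<subseteq> c ` {0..1}"
    using conn_chain_sum_param[OF assms] by blast
  have chain: "is_chain01 n C" and sub: "C \<subseteq> cube n"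
    using C by (auto simp: conn_chains_def is_chain01_def)
  define fs where "fs i t = c t i" for i t
  have "fs \<in> tuples n"
    using chain_param_inM[OF n chain c] unfolding tuples_def fs_def by blast
  moreover have "im n fs = C"
  proof
    show "im n fs \<subseteq> C"
      using c sub pt_cube by (force simp: im_eq_image fs_def)
    show "C \<subseteq> im n fs"
      using onto c sub pt_cube by (force simp: im_eq_image fs_def)
  qed
  ultimately show thesis
    using that by blast
qed

section \<open>Monotone couplings\<close>

lemma tuple_reparam_mono:
  assumes fs: "fs \<in> tuples n" and U: "continuous_on {0..1} U" "mono_on {0..1} U"
    "U ` {0..1} \<subseteq> {0..1}" "U 0 = 0" "U 1 = 1"
  shows "(\<lambda>i t. fs i (U t)) \<in> tuples n" "im n (\<lambda>i t. fs i (U t)) = im n fs"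
proof -
  have "inM (\<lambda>t. fs i (U t))" if i: "i < n" for i
    unfolding inM_def
  proof (intro conjI)
    show "continuous_on {0..1} (\<lambda>t. fs i (U t))"
      using U(1,3) by (intro continuous_on_compose2[OF inM_cont[OF tuples_inM[OF fs i]]]) auto
    show "mono_on {0..1} (\<lambda>t. fs i (U t))"
    proof (rule mono_onI)
      fix r s :: real assume rs: "r \<in> {0..1}" "s \<in> {0..1}" "r \<le> s"
      then have "U r \<in> {0..1}" "U s \<in> {0..1}"
        using U(3) by blast+
      moreover have "U r \<le> U s"
        using mono_onD[OF U(2) rs] .
      ultimately show "fs i (U r) \<le> fs i (U s)"
        by (rule inM_mono[OF tuples_inM[OF fs i]])
    qed
  qed (use U(4,5) fs i in \<open>simp_all add: inM_0 inM_1 tuples_inM\<close>)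
  then show "(\<lambda>i t. fs i (U t)) \<in> tuples n"
    by (simp add: tuples_def)
  have "U ` {0..1} = {0..1}"
  proof
    show "{0..1} \<subseteq> U ` {0..1}"
    proof
      fix s :: real assume "s \<in> {0..1}"
      then obtain t where "0 \<le> t" "t \<le> 1" "U t = s"
        using IVT'[of U 0 s 1, OF _ _ _ U(1)] U(4,5) by auto
      then show "s \<in> U ` {0..1}" by auto
    qed
  qed (rule U(3))
  then have "(\<lambda>t. pt n (\<lambda>i. fs i t)) ` U ` {0..1} = (\<lambda>t. pt n (\<lambda>i. fs i t)) ` {0..1}"
    by simp
  then show "im n (\<lambda>i t. fs i (U t)) = im n fs"
    unfolding im_eq_image image_image .
qed

context
  fixes \<Phi> :: "real \<Rightarrow> real \<Rightarrow> real"
  assumes cont: "continuous_on ({0..1} \<times> {0..1}) (\<lambda>x. \<Phi> (fst x) (snd x))"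
    and strict: "\<And>s s' r r'. s \<in> {0..1} \<Longrightarrow> s' \<in> {0..1} \<Longrightarrow> r \<in> {0..1} \<Longrightarrow> r' \<in> {0..1}
      \<Longrightarrow> s < s' \<Longrightarrow> r' \<le> r \<Longrightarrow> \<Phi> s r < \<Phi> s' r'"
    and nonpos: "\<And>r. r \<in> {0..1} \<Longrightarrow> \<Phi> 0 r \<le> 0" "\<And>s. s \<in> {0..1} \<Longrightarrow> \<Phi> s 1 \<le> 0"
    and nonneg: "\<And>r. r \<in> {0..1} \<Longrightarrow> 0 \<le> \<Phi> 1 r" "\<And>s. s \<in> {0..1} \<Longrightarrow> 0 \<le> \<Phi> s 0"
begin

lemma antidiagonal_unique_zero:
  assumes "\<tau> \<in> {0..2}"
  shows "\<exists>!s. s \<in> {max 0 (\<tau> - 1)..min 1 \<tau>} \<and> \<Phi> s (\<tau> - s) = 0"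
proof -
  define lo hi where "lo = max 0 (\<tau> - 1)" "hi = min 1 \<tau>"
  have on_square: "s \<in> {0..1} \<and> \<tau> - s \<in> {0..1}" if "s \<in> {lo..hi}" for s
    using that assms by (auto simp: lo_hi_def)
  have "continuous_on {lo..hi} (\<lambda>s. (s, \<tau> - s))"
    by (intro continuous_intros)
  moreover have "(\<lambda>s. (s, \<tau> - s)) ` {lo..hi} \<subseteq> {0..1} \<times> {0..1}"
    using on_square by auto
  ultimately have "continuous_on {lo..hi} (\<lambda>s. \<Phi> (fst (s, \<tau> - s)) (snd (s, \<tau> - s)))"
    by (rule continuous_on_compose2[OF cont])
  then have "continuous_on {lo..hi} (\<lambda>s. \<Phi> s (\<tau> - s))"
    by simp
  moreover have "\<Phi> lo (\<tau> - lo) \<le> 0" "0 \<le> \<Phi> hi (\<tau> - hi)"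
    using nonpos nonneg assms by (auto simp: lo_hi_def max_def min_def)
  moreover have "lo \<le> hi"
    using assms by (auto simp: lo_hi_def)
  ultimately obtain s where s: "s \<in> {lo..hi}" "\<Phi> s (\<tau> - s) = 0"
    using IVT'[of "\<lambda>s. \<Phi> s (\<tau> - s)" lo 0 hi] by auto
  moreover have "s' = s" if "s' \<in> {lo..hi}" "\<Phi> s' (\<tau> - s') = 0" for s'
    using strict[of s s' "\<tau> - s" "\<tau> - s'"] strict[of s' s "\<tau> - s'" "\<tau> - s"] on_square s that
    by (cases s s' rule: linorder_cases) auto
  ultimately show ?thesis
    unfolding lo_hi_def by blast
qed

lemma monotone_path_through_zeros:
  obtains U V :: "real \<Rightarrow> real" where "continuous_on {0..1} U" "mono_on {0..1} U" "U ` {0..1} \<subseteq> {0..1}" "U 0 = 0" "U 1 = 1"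
    "continuous_on {0..1} V" "mono_on {0..1} V" "V ` {0..1} \<subseteq> {0..1}" "V 0 = 0" "V 1 = 1"
    "\<And>t. t \<in> {0..1} \<Longrightarrow> \<Phi> (U t) (V t) = 0"
proof -
  define u where "u \<tau> = (THE s. s \<in> {max 0 (\<tau> - 1)..min 1 \<tau>} \<and> \<Phi> s (\<tau> - s) = 0)" for \<tau>
  have u: "u \<tau> \<in> {max 0 (\<tau> - 1)..min 1 \<tau>}" "\<Phi> (u \<tau>) (\<tau> - u \<tau>) = 0" if "\<tau> \<in> {0..2}" for \<tau>
    using theI'[OF antidiagonal_unique_zero[OF that]] unfolding u_def by auto
  \<comment> \<open>two zeros on the antidiagonals cannot be strictly ordered in one coordinate and reversely in the other\<close>
  have u_mono: "u \<tau> \<le> u \<tau>' \<and> \<tau> - u \<tau> \<le> \<tau>' - u \<tau>'" if "\<tau> \<in> {0..2}" "\<tau>' \<in> {0..2}" "\<tau> \<le> \<tau>'" for \<tau> \<tau>'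
    using u[OF that(1)] u[OF that(2)] that
      strict[of "u \<tau>'" "u \<tau>" "\<tau>' - u \<tau>'" "\<tau> - u \<tau>"] strict[of "u \<tau>" "u \<tau>'" "\<tau> - u \<tau>" "\<tau>' - u \<tau>'"]
    by (smt (verit) atLeastAtMost_iff)
  define U V where "U t = u (2 * t)" "V t = 2 * t - u (2 * t)" for t
  have UV01: "U t \<in> {0..1}" "V t \<in> {0..1}" if "t \<in> {0..1}" for t
    using u(1)[of "2 * t"] that by (auto simp: U_V_def)
  have UV_mono: "U t \<le> U t'" "V t \<le> V t'" if "t \<in> {0..1}" "t' \<in> {0..1}" "t \<le> t'" for t t'
    using u_mono[of "2 * t" "2 * t'"] that by (auto simp: U_V_def)
  have "2-lipschitz_on {0..1} U" "2-lipschitz_on {0..1} V"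
    using UV_mono by (auto intro!: lipschitz_onI simp: dist_real_def abs_le_iff U_V_def,
        (smt (verit) UV_mono U_V_def)+)
  then have cont_UV: "continuous_on {0..1} U" "continuous_on {0..1} V"
    by (auto intro: lipschitz_on_continuous_on)
  have mono_UV: "mono_on {0..1} U" "mono_on {0..1} V"
    using UV_mono by (auto intro: mono_onI)
  have image_UV: "U ` {0..1} \<subseteq> {0..1}" "V ` {0..1} \<subseteq> {0..1}"
    using UV01 by auto
  have ends_UV: "U 0 = 0" "U 1 = 1" "V 0 = 0" "V 1 = 1"
    using u(1)[of 0] u(1)[of 2] by (auto simp: U_V_def)
  have "\<Phi> (U t) (V t) = 0" if "t \<in> {0..1}" for t
    using u(2)[of "2 * t"] that by (simp add: U_V_def)
  then show thesis
    by (rule that[OF cont_UV(1) mono_UV(1) image_UV(1) ends_UV(1,2) cont_UV(2) mono_UV(2) image_UV(2) ends_UV(3,4)])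
qed

end

definition lead :: "nat \<Rightarrow> (nat \<Rightarrow> real \<Rightarrow> real) \<Rightarrow> (nat \<Rightarrow> real \<Rightarrow> real) \<Rightarrow> real \<Rightarrow> real \<Rightarrow> real" where
  "lead n fs gs s r = Max ((\<lambda>i. fs i s - gs i r) ` {..<n})"

lemma lead_le_iff: "0 < n \<Longrightarrow> lead n fs gs s r \<le> c \<longleftrightarrow> (\<forall>i<n. fs i s - gs i r \<le> c)"
  unfolding lead_def by (rule Max_lessThan_le_iff)

lemma lead_less_iff: "0 < n \<Longrightarrow> lead n fs gs s r < c \<longleftrightarrow> (\<forall>i<n. fs i s - gs i r < c)"
  unfolding lead_def by (rule Max_lessThan_less_iff)

lemma lead_ge: "i < n \<Longrightarrow> fs i s - gs i r \<le> lead n fs gs s r"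
  unfolding lead_def by (rule Max_lessThan_ge)

lemma lead_mono:
  assumes n: "0 < n" and fs: "fs \<in> tuples n" and gs: "gs \<in> tuples n"
    and st: "s \<in> {0..1}" "s' \<in> {0..1}" "r \<in> {0..1}" "r' \<in> {0..1}" "s \<le> s'" "r' \<le> r"
  shows "lead n fs gs s r \<le> lead n fs gs s' r'"
proof -
  have "fs i s - gs i r \<le> lead n fs gs s' r'" if "i < n" for i
    using inM_mono[OF tuples_inM[OF fs that] st(1,2,5)] inM_mono[OF tuples_inM[OF gs that] st(4,3,6)]
      lead_ge[OF that, of fs s' gs r'] by linarith
  then show ?thesis
    using lead_le_iff[OF n] by blast
qed

lemma lead_start_nonpos:
  assumes n: "0 < n" and fs: "fs \<in> tuples n" and gs: "gs \<in> tuples n" and "r \<in> {0..1}"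
  shows "lead n fs gs 0 r \<le> 0"
  using inM_range[OF tuples_inM[OF gs] assms(4)] by (simp add: lead_le_iff[OF n] inM_0 tuples_inM[OF fs])

lemma lead_end_nonpos:
  assumes n: "0 < n" and fs: "fs \<in> tuples n" and gs: "gs \<in> tuples n" and "s \<in> {0..1}"
  shows "lead n fs gs s 1 \<le> 0"
  using inM_range[OF tuples_inM[OF fs] assms(4)] by (simp add: lead_le_iff[OF n] inM_1 tuples_inM[OF gs])

lemma continuous_on_lead:
  assumes n: "0 < n" and fs: "fs \<in> tuples n" and gs: "gs \<in> tuples n"
    and "continuous_on S f" "continuous_on S g" "f ` S \<subseteq> {0..1}" "g ` S \<subseteq> {0..1}"
  shows "continuous_on S (\<lambda>x. lead n fs gs (f x) (g x))"
  unfolding lead_def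
proof (rule continuous_on_Max)
  fix i assume "i \<in> {..<n}"
  then have "continuous_on S (\<lambda>x. fs i (f x))" "continuous_on S (\<lambda>x. gs i (g x))"
    using assms by (auto intro: continuous_on_compose2 inM_cont tuples_inM)
  then show "continuous_on S (\<lambda>x. fs i (f x) - gs i (g x))"
    by (rule continuous_on_diff)
qed (use n in auto)

(* its zeros pair times s, r at which neither tuple leads the other by more than d + eta *)
definition lead_potential ::
    "nat \<Rightarrow> (nat \<Rightarrow> real \<Rightarrow> real) \<Rightarrow> (nat \<Rightarrow> real \<Rightarrow> real) \<Rightarrow> real \<Rightarrow> real \<Rightarrow> real \<Rightarrow> real \<Rightarrow> real" where
  "lead_potential n fs gs d \<eta> s r = max (lead n fs gs s r) d - max (lead n gs fs r s) d + \<eta> * (s - r)"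

lemma continuous_on_lead_potential:
  assumes n: "0 < n" and fs: "fs \<in> tuples n" and gs: "gs \<in> tuples n"
  shows "continuous_on ({0..1} \<times> {0..1}) (\<lambda>x. lead_potential n fs gs d \<eta> (fst x) (snd x))"
proof -
  have sq: "continuous_on ({0..1} \<times> {0..1}) fst" "continuous_on ({0..1} \<times> {0..1}) snd"
    "fst ` ({0..1} \<times> {0..1}) \<subseteq> {0..1}" "snd ` ({0..1} \<times> {0..1}) \<subseteq> {0..1}"
    by (auto intro: continuous_on_fst continuous_on_snd continuous_on_id)
  have "continuous_on ({0..1} \<times> {0..1}) (\<lambda>x. lead n fs gs (fst x) (snd x))"
    "continuous_on ({0..1} \<times> {0..1}) (\<lambda>x. lead n gs fs (snd x) (fst x))"
    by (rule continuous_on_lead[OF n fs gs sq(1,2,3,4)], rule continuous_on_lead[OF n gs fs sq(2,1,4,3)])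
  then show ?thesis
    unfolding lead_potential_def by (intro continuous_intros)
qed

lemma lead_potential_strict_mono:
  assumes n: "0 < n" and fs: "fs \<in> tuples n" and gs: "gs \<in> tuples n" and "0 < \<eta>"
    and st: "s \<in> {0..1}" "s' \<in> {0..1}" "r \<in> {0..1}" "r' \<in> {0..1}" "s < s'" "r' \<le> r"
  shows "lead_potential n fs gs d \<eta> s r < lead_potential n fs gs d \<eta> s' r'"
proof -
  have "lead n fs gs s r \<le> lead n fs gs s' r'" "lead n gs fs r' s' \<le> lead n gs fs r s"
    using lead_mono[OF n fs gs, of s s' r r'] lead_mono[OF n gs fs, of r' r s' s] st by simp_all
  moreover have "\<eta> * (s - r) < \<eta> * (s' - r')"
    using st \<open>0 < \<eta>\<close> by simp
  ultimately show ?thesis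
    unfolding lead_potential_def by linarith
qed

lemma lead_potential_boundary:
  assumes n: "0 < n" and fs: "fs \<in> tuples n" and gs: "gs \<in> tuples n" and "0 \<le> d" "0 \<le> \<eta>"
    and "s \<in> {0..1}"
  shows "lead_potential n fs gs d \<eta> 0 s \<le> 0" "lead_potential n fs gs d \<eta> s 1 \<le> 0"
    "0 \<le> lead_potential n fs gs d \<eta> 1 s" "0 \<le> lead_potential n fs gs d \<eta> s 0"
proof -
  have "0 \<le> \<eta> * s" "0 \<le> \<eta> * (1 - s)"
    using assms(4-6) by simp_all
  then show "lead_potential n fs gs d \<eta> 0 s \<le> 0" "lead_potential n fs gs d \<eta> s 1 \<le> 0"
    "0 \<le> lead_potential n fs gs d \<eta> 1 s" "0 \<le> lead_potential n fs gs d \<eta> s 0"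
    using lead_start_nonpos[OF n fs gs \<open>s \<in> {0..1}\<close>] lead_end_nonpos[OF n gs fs \<open>s \<in> {0..1}\<close>]
      lead_end_nonpos[OF n fs gs \<open>s \<in> {0..1}\<close>] lead_start_nonpos[OF n gs fs \<open>s \<in> {0..1}\<close>] \<open>0 \<le> d\<close>
    by (auto simp: lead_potential_def max_def algebra_simps)
qed

lemma lead_le_if_lead_potential_zero:
  assumes "lead_potential n fs gs d \<eta> s r = 0" "s \<in> {0..1}" "r \<in> {0..1}" "0 \<le> \<eta>"
    and "lead n fs gs s r < d \<or> lead n gs fs r s < d"
  shows "lead n fs gs s r \<le> d + \<eta>" "lead n gs fs r s \<le> d + \<eta>"
proof -
  have "\<bar>s - r\<bar> \<le> 1"
    using assms(2,3) by auto
  then have "\<bar>\<eta> * (s - r)\<bar> \<le> \<eta>"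
    using assms(4) by (simp add: abs_mult mult_left_le)
  then have "\<bar>max (lead n fs gs s r) d - max (lead n gs fs r s) d\<bar> \<le> \<eta>"
    using assms(1) by (simp add: lead_potential_def)
  then show "lead n fs gs s r \<le> d + \<eta>" "lead n gs fs r s \<le> d + \<eta>"
    using assms(5) by linarith+
qed

lemma lead_less_if_close:
  assumes n: "0 < n" and gs: "gs \<in> tuples n" and "r \<in> {0..1}"
    and close: "r0 \<in> {0..1}" "\<And>i. i < n \<Longrightarrow> \<bar>fs i s - gs i r0\<bar> < d"
  shows "lead n fs gs s r < d \<or> lead n gs fs r s < d"
proof -
  have "gs i r \<le> gs i r0" if "r \<le> r0" "i < n" for i
    using inM_mono[OF tuples_inM[OF gs that(2)] \<open>r \<in> {0..1}\<close> close(1) that(1)] .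
  moreover have "gs i r0 \<le> gs i r" if "r0 \<le> r" "i < n" for i
    using inM_mono[OF tuples_inM[OF gs that(2)] close(1) \<open>r \<in> {0..1}\<close> that(1)] .
  ultimately have "(\<forall>i<n. fs i s - gs i r < d) \<or> (\<forall>i<n. gs i r - fs i s < d)"
    using close(2) by (fastforce simp: abs_less_iff)
  then show ?thesis
    by (simp add: lead_less_iff[OF n])
qed

lemma coupling:
  assumes n: "0 < n" and fs: "fs \<in> tuples n" and gs: "gs \<in> tuples n" and "0 < \<eta>"
    and close: "\<And>s. s \<in> {0..1} \<Longrightarrow> \<exists>r\<in>{0..1}. \<forall>i<n. \<bar>fs i s - gs i r\<bar> < d"
  obtains fs' gs' where "fs' \<in> tuples n" "gs' \<in> tuples n" "im n fs' = im n fs" "im n gs' = im n gs"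
    "\<And>i. i < n \<Longrightarrow> supdist (fs' i) (gs' i) \<le> d + \<eta>"
proof -
  have "0 < d"
    using close[of 0] n by fastforce
  have "lead_potential n fs gs d \<eta> 0 s \<le> 0" "lead_potential n fs gs d \<eta> s 1 \<le> 0"
    "0 \<le> lead_potential n fs gs d \<eta> 1 s" "0 \<le> lead_potential n fs gs d \<eta> s 0" if "s \<in> {0..1}" for s
    using lead_potential_boundary[OF n fs gs _ _ that] \<open>0 < d\<close> \<open>0 < \<eta>\<close> by simp_all
  note boundary = this
  obtain U V :: "real \<Rightarrow> real"
    where U: "continuous_on {0..1} U" "mono_on {0..1} U" "U ` {0..1} \<subseteq> {0..1}" "U 0 = 0" "U 1 = 1"
      and V: "continuous_on {0..1} V" "mono_on {0..1} V" "V ` {0..1} \<subseteq> {0..1}" "V 0 = 0" "V 1 = 1"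
      and zero: "\<And>t. t \<in> {0..1} \<Longrightarrow> lead_potential n fs gs d \<eta> (U t) (V t) = 0"
    using monotone_path_through_zeros[of "lead_potential n fs gs d \<eta>", OF continuous_on_lead_potential[OF n fs gs]
        lead_potential_strict_mono[OF n fs gs \<open>0 < \<eta>\<close>] boundary] by blast
  have "\<bar>fs i (U t) - gs i (V t)\<bar> \<le> d + \<eta>" if i: "i < n" and t: "t \<in> {0..1}" for i t
  proof -
    have UV: "U t \<in> {0..1}" "V t \<in> {0..1}"
      using U(3) V(3) t by blast+
    then obtain r0 where "r0 \<in> {0..1}" "\<And>i. i < n \<Longrightarrow> \<bar>fs i (U t) - gs i r0\<bar> < d"
      using close by blast
    then have "lead n fs gs (U t) (V t) \<le> d + \<eta>" "lead n gs fs (V t) (U t) \<le> d + \<eta>"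
      using lead_le_if_lead_potential_zero[OF zero[OF t] UV] lead_less_if_close[OF n gs UV(2)] \<open>0 < \<eta>\<close>
      by auto
    then show ?thesis
      using lead_ge[OF i, of fs "U t" gs "V t"] lead_ge[OF i, of gs "V t" fs "U t"] by (simp add: abs_le_iff)
  qed
  then have "supdist (fs i \<circ> U) (gs i \<circ> V) \<le> d + \<eta>" if "i < n" for i
    using that by (auto intro: supdist_le)
  then show thesis
    using that[of "\<lambda>i. fs i \<circ> U" "\<lambda>i. gs i \<circ> V"] tuple_reparam_mono[OF fs U] tuple_reparam_mono[OF gs V]
    by (simp add: comp_def)
qed

section \<open>Type distance and Hausdorff distance\<close>

lemma supd_le_iff: "0 < n \<Longrightarrow> supd n x y \<le> c \<longleftrightarrow> (\<forall>i<n. \<bar>x i - y i\<bar> \<le> c)"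
  unfolding supd_def by (rule Max_lessThan_le_iff)

lemma supd_ge: "i < n \<Longrightarrow> \<bar>x i - y i\<bar> \<le> supd n x y"
  unfolding supd_def by (rule Max_lessThan_ge)

lemma supd_nonneg: "0 < n \<Longrightarrow> 0 \<le> supd n x y"
  using supd_ge[of 0 n x y] by linarith

lemma supd_le_1:
  assumes "0 < n" "x \<in> cube n" "y \<in> cube n"
  shows "supd n x y \<le> 1"
proof -
  have "\<bar>x i - y i\<bar> \<le> 1" if "i < n" for i
    using assms(2,3) that by (simp add: cube_def abs_le_iff) (meson add_increasing2 diff_le_eq)
  then show ?thesis
    by (simp add: supd_le_iff[OF assms(1)])
qed

lemma hausd_le:
  assumes n: "0 < n" and "A \<noteq> {}" "B \<noteq> {}"
    and AB: "\<And>a. a \<in> A \<Longrightarrow> \<exists>b\<in>B. supd n a b \<le> c" and BA: "\<And>b. b \<in> B \<Longrightarrow> \<exists>a\<in>A. supd n a b \<le> c"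
  shows "hausd n A B \<le> c"
proof -
  have bdd: "bdd_below ((\<lambda>b. supd n a b) ` B)" "bdd_below ((\<lambda>a. supd n a b) ` A)" for a b
    by (rule bdd_belowI2[where m=0], rule supd_nonneg[OF n])+
  have "(INF b\<in>B. supd n a b) \<le> c" if "a \<in> A" for a
    using AB[OF that] by (auto intro: cINF_lower2[OF bdd(1)])
  moreover have "(INF a\<in>A. supd n a b) \<le> c" if "b \<in> B" for b
    using BA[OF that] by (auto intro: cINF_lower2[OF bdd(2)])
  ultimately show ?thesis
    unfolding hausd_def using assms(2,3) by (auto intro!: cSUP_least)
qed

lemma exists_close_if_hausd_less:
  assumes n: "0 < n" and sub: "A \<subseteq> cube n" "B \<subseteq> cube n" and "B \<noteq> {}"
    and "hausd n A B < d" "a \<in> A"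
  shows "\<exists>b\<in>B. supd n a b < d"
proof -
  have bdd: "bdd_below ((\<lambda>b. supd n a b) ` B)" for a
    by (rule bdd_belowI2[where m=0], rule supd_nonneg[OF n])
  obtain b0 where "b0 \<in> B"
    using \<open>B \<noteq> {}\<close> by blast
  have "(INF b\<in>B. supd n a' b) \<le> 1" if "a' \<in> A" for a'
    using supd_le_1[OF n] sub that \<open>b0 \<in> B\<close> by (intro cINF_lower2[OF bdd \<open>b0 \<in> B\<close>]) auto
  then have "bdd_above ((\<lambda>a. INF b\<in>B. supd n a b) ` A)"
    by (rule bdd_aboveI2)
  then have "(INF b\<in>B. supd n a b) \<le> (SUP a\<in>A. INF b\<in>B. supd n a b)"
    using \<open>a \<in> A\<close> by (intro cSUP_upper)
  also have "\<dots> < d"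
    using \<open>hausd n A B < d\<close> by (simp add: hausd_def)
  finally show ?thesis
    using cINF_less_iff[OF \<open>B \<noteq> {}\<close> bdd] by blast
qed

lemma tupdist_le_iff: "0 < n \<Longrightarrow> tupdist n fs gs \<le> c \<longleftrightarrow> (\<forall>i<n. supdist (fs i) (gs i) \<le> c)"
  unfolding tupdist_def by (rule Max_lessThan_le_iff)

lemma tupdist_nonneg:
  assumes "0 < n" "fs \<in> tuples n" "gs \<in> tuples n"
  shows "0 \<le> tupdist n fs gs"
proof -
  have "0 \<le> supdist (fs 0) (gs 0)"
    using supdist_range[OF tuples_inM[OF assms(2,1)] tuples_inM[OF assms(3,1)]] by simp
  also have "\<dots> \<le> tupdist n fs gs"
    unfolding tupdist_def by (rule Max_lessThan_ge[OF assms(1)])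
  finally show ?thesis .
qed

lemma hausd_im_le_tupdist:
  assumes n: "0 < n" and fs: "fs \<in> tuples n" and gs: "gs \<in> tuples n"
  shows "hausd n (im n fs) (im n gs) \<le> tupdist n fs gs"
proof -
  have "supd n (pt n (\<lambda>i. fs i t)) (pt n (\<lambda>i. gs i t)) \<le> tupdist n fs gs" if "t \<in> {0..1}" for t
    using supdist_ge[OF tuples_inM[OF fs] tuples_inM[OF gs] that] tupdist_le_iff[OF n, of fs gs]
    by (force simp: supd_le_iff[OF n] pt_def)
  then have "\<forall>a\<in>im n fs. \<exists>b\<in>im n gs. supd n a b \<le> tupdist n fs gs"
    "\<forall>b\<in>im n gs. \<exists>a\<in>im n fs. supd n a b \<le> tupdist n fs gs"
    unfolding im_eq_image by blast+
  then show ?thesis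
    using n by (intro hausd_le) (auto simp: im_eq_image)
qed

lemma close_times_if_hausd_less:
  assumes n: "0 < n" and fs: "fs \<in> tuples n" and gs: "gs \<in> tuples n"
    and "hausd n (im n fs) (im n gs) < d" "s \<in> {0..1}"
  shows "\<exists>r\<in>{0..1}. \<forall>i<n. \<bar>fs i s - gs i r\<bar> < d"
proof -
  have "pt n (\<lambda>i. fs i s) \<in> im n fs" "im n gs \<noteq> {}"
    using \<open>s \<in> {0..1}\<close> by (auto simp: im_eq_image)
  then obtain b where "b \<in> im n gs" "supd n (pt n (\<lambda>i. fs i s)) b < d"
    using exists_close_if_hausd_less[OF n im_subset_cube[OF fs] im_subset_cube[OF gs]] assms(4) by blast
  then show ?thesis
    using supd_ge[of _ n "pt n (\<lambda>i. fs i s)" b] by (force simp: im_eq_image pt_def)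
qed

lemma tdist_le_tupdist:
  assumes n: "0 < n" and fs: "fs \<in> tuples n" and gs: "gs \<in> tuples n"
  shows "tdist n (tp n fs) (tp n gs) \<le> tupdist n fs gs"
  unfolding tdist_def
proof (rule cInf_lower)
  show "bdd_below {tupdist n fs' gs' |fs' gs'.
      fs' \<in> tuples n \<and> gs' \<in> tuples n \<and> tp n fs' = tp n fs \<and> tp n gs' = tp n gs}"
    using tupdist_nonneg[OF n] by (auto intro!: bdd_belowI[of _ 0])
qed (use fs gs in blast)

lemma le_tdist:
  assumes fs: "fs \<in> tuples n" and gs: "gs \<in> tuples n"
    and le: "\<And>fs' gs'. fs' \<in> tuples n \<Longrightarrow> gs' \<in> tuples n \<Longrightarrow> tp n fs' = tp n fs \<Longrightarrow> tp n gs' = tp n gs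
      \<Longrightarrow> c \<le> tupdist n fs' gs'"
  shows "c \<le> tdist n (tp n fs) (tp n gs)"
  unfolding tdist_def using fs gs le by (intro cInf_greatest) blast+

lemma hausd_im_eq_tdist:
  assumes n: "0 < n" and fs: "fs \<in> tuples n" and gs: "gs \<in> tuples n"
  shows "hausd n (im n fs) (im n gs) = tdist n (tp n fs) (tp n gs)"
proof (rule antisym)
  let ?h = "hausd n (im n fs) (im n gs)"
  show "?h \<le> tdist n (tp n fs) (tp n gs)"
  proof (rule le_tdist[OF fs gs])
    fix fs' gs' assume fs': "fs' \<in> tuples n" "tp n fs' = tp n fs" and gs': "gs' \<in> tuples n" "tp n gs' = tp n gs"
    then have "im n fs' = im n fs" "im n gs' = im n gs"
      using im_eq_if_tp_eq[OF n fs'(1) fs] im_eq_if_tp_eq[OF n gs'(1) gs] by simp_all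
    then show "?h \<le> tupdist n fs' gs'"
      using hausd_im_le_tupdist[OF n fs'(1) gs'(1)] by simp
  qed
  have "tdist n (tp n fs) (tp n gs) \<le> ?h + e" if "0 < e" for e
  proof -
    have "\<exists>r\<in>{0..1}. \<forall>i<n. \<bar>fs i s - gs i r\<bar> < ?h + e / 2" if "s \<in> {0..1}" for s
      using close_times_if_hausd_less[OF n fs gs _ that] \<open>0 < e\<close> by simp
    then obtain fs' gs' where fs': "fs' \<in> tuples n" "im n fs' = im n fs"
      and gs': "gs' \<in> tuples n" "im n gs' = im n gs"
      and close: "\<And>i. i < n \<Longrightarrow> supdist (fs' i) (gs' i) \<le> ?h + e / 2 + e / 2"
      using coupling[OF n fs gs, of "e / 2" "?h + e / 2"] \<open>0 < e\<close> by (metis half_gt_zero)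
    have "tdist n (tp n fs) (tp n gs) = tdist n (tp n fs') (tp n gs')"
      using tp_eq_if_im_eq[OF n fs'(1) fs fs'(2)] tp_eq_if_im_eq[OF n gs'(1) gs gs'(2)] by simp
    also have "\<dots> \<le> tupdist n fs' gs'"
      by (rule tdist_le_tupdist[OF n fs'(1) gs'(1)])
    also have "\<dots> \<le> ?h + e"
      using close by (simp add: tupdist_le_iff[OF n] add_ac)
    finally show ?thesis .
  qed
  then show "tdist n (tp n fs) (tp n gs) \<le> ?h"
    by (rule field_le_epsilon)
qed

lemma imT_tp:
  assumes n: "0 < n" and fs: "fs \<in> tuples n"
  shows "imT n (tp n fs) = im n fs"
proof -
  have "\<exists>fs'. fs' \<in> tuples n \<and> tp n fs' = tp n fs"
    using fs by blast
  then have "(SOME fs'. fs' \<in> tuples n \<and> tp n fs' = tp n fs) \<in> tuples n \<and>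
      tp n (SOME fs'. fs' \<in> tuples n \<and> tp n fs' = tp n fs) = tp n fs"
    by (rule someI_ex)
  then show ?thesis
    unfolding imT_def using im_eq_if_tp_eq[OF n _ fs] by blast
qed

lemma inj_on_imT:
  assumes n: "0 < n"
  shows "inj_on (imT n) (Sn n)"
proof (rule inj_onI)
  fix p q assume "p \<in> Sn n" "q \<in> Sn n" "imT n p = imT n q"
  then obtain fs gs where "fs \<in> tuples n" "gs \<in> tuples n" "p = tp n fs" "q = tp n gs"
    "im n fs = im n gs"
    using imT_tp[OF n] by (auto simp: Sn_def)
  then show "p = q"
    using tp_eq_if_im_eq[OF n] by blast
qed

lemma imT_image_Sn:
  assumes n: "0 < n"
  shows "imT n ` Sn n = conn_chains n"
proof
  show "imT n ` Sn n \<subseteq> conn_chains n"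
    using imT_tp[OF n] im_in_conn_chains by (auto simp: Sn_def)
  show "conn_chains n \<subseteq> imT n ` Sn n"
    using conn_chain_eq_im[OF n] imT_tp[OF n] by (metis Sn_def image_eqI subsetI)
qed

theorem mainTheorem15:
  fixes n :: nat
  assumes "n \<ge> 1"
  shows "(\<forall>fs\<in>tuples n. \<forall>gs\<in>tuples n. tp n fs = tp n gs \<longrightarrow> im n fs = im n gs)
    \<and> bij_betw (imT n) (Sn n) (conn_chains n)
    \<and> (\<forall>p\<in>Sn n. \<forall>q\<in>Sn n. hausd n (imT n p) (imT n q) = tdist n p q)"
proof (intro conjI)
  have n: "0 < n"
    using assms by simp
  show "\<forall>fs\<in>tuples n. \<forall>gs\<in>tuples n. tp n fs = tp n gs \<longrightarrow> im n fs = im n gs"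
    using im_eq_if_tp_eq[OF n] by blast
  show "bij_betw (imT n) (Sn n) (conn_chains n)"
    using inj_on_imT[OF n] imT_image_Sn[OF n] by (simp add: bij_betw_def)
  show "\<forall>p\<in>Sn n. \<forall>q\<in>Sn n. hausd n (imT n p) (imT n q) = tdist n p q"
    using imT_tp[OF n] hausd_im_eq_tdist[OF n] by (auto simp: Sn_def)
qed

end
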